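(* Let $N$ be a rooted binary phylogenetic network and $\mathcal{Z}=\{Z_1,\dots,Z_d\}$ its maximal zig-zag trail decomposition. Let $(F_n)$ be the Fibonacci sequence, $F_1=F_2=1$, $F_n=F_{n-1}+F_{n-2}$ ($n\ge3$), and $(L_n)$ the Lucas sequence, $L_1=1$, $L_2=3$, $L_n=L_{n-1}+L_{n-2}$ ($n\ge 3$). Then the number of support networks of $N$ is $$|\mathcal{A}_N|=\prod_{Z_i\text{ a fence}}F_{|E(Z_i)|}\cdot\prod_{Z_i\text{ a crown}}L_{|E(Z_i)|}.$$ Moreover, $|\mathcal{A}_N|=\Theta(\phi^{|E(N)|})$, where $\phi=(1+\sqrt5)/2$ is the golden ratio.
   Context: A rooted binary phylogenetic network on a non-empty finite set $X$ is a finite simple directed acyclic graph $N$ with: a unique vertex $\rho$ of in-degree $0$, having out-degree $1$ or $2$; leaf set (vertices of out-degree $0$) equal to $X$; every other vertex has in-degree and out-degree in $\{1,2\}$. Smoothing a vertex with in- and out-degree $1$ means suppressing it. A spanning subgraph $G$ of $N$ is a support network of $N$ if smoothing all vertices of $G$ with $\mathrm{indeg}_G=\mathrm{outdeg}_G=1$ yields a rooted binary phylogenetic network on $X$; $\mathcal{A}_N$ denotes the set of all support networks of $N$ (support networks being identified with their edge sets). A zig-zag trail in $N$ is a connected subgraph $Z$ with $m\ge1$ edges that can be ordered $(e_1,\dots,e_m)$ so that consecutive edges $e_i,e_{i+1}$ share a head or share a tail; it is maximal if not a proper subgraph of another zig-zag trail. The maximal zig-zag trails partition $E(N)$; this collection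 is the maximal zig-zag trail decomposition. A crown is a maximal zig-zag trail with an even number $m\ge4$ of edges that can be written cyclically as $v_0<v_1>v_2<\cdots>v_{m-2}<v_{m-1}>v_m=v_0$ (where $a<b$ denotes the edge $(b,a)$... i.e., the trail closes up into a cycle of alternating orientations). A fence is a maximal zig-zag trail that is not a crown. *)

theory Defs
  imports Complex_Main "HOL-Number_Theory.Fib"
begin

text \<open>Directed graphs are given by a vertex set V and an edge set E of pairs (tail, head).\<close>

definition indeg :: "('a \<times> 'a) set \<Rightarrow> 'a \<Rightarrow> nat" where
  "indeg E v = card {u. (u, v) \<in> E}"

definition outdeg :: "('a \<times> 'a) set \<Rightarrow> 'a \<Rightarrow> nat" where
  "outdeg E v = card {w. (v, w) \<in> E}"

definition rbpn :: "'a set \<Rightarrow> ('a \<times> 'a) set \<Rightarrow> 'a set \<Rightarrow> bool" where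
  "rbpn V E X \<longleftrightarrow>
     finite V \<and> E \<subseteq> V \<times> V \<and> (\<forall>v. (v, v) \<notin> E) \<and> acyclic E \<and>
     X \<noteq> {} \<and>
     (\<exists>!r. r \<in> V \<and> indeg E r = 0) \<and>
     (\<forall>r\<in>V. indeg E r = 0 \<longrightarrow> outdeg E r \<in> {1, 2}) \<and>
     X = {v \<in> V. outdeg E v = 0} \<and>
     (\<forall>v\<in>V. indeg E v \<noteq> 0 \<longrightarrow> indeg E v \<in> {1, 2} \<and> outdeg E v \<le> 2)"

definition walk :: "('a \<times> 'a) set \<Rightarrow> 'a list \<Rightarrow> bool" where
  "walk G xs \<longleftrightarrow> (\<forall>i. Suc i < length xs \<longrightarrow> (xs ! i, xs ! Suc i) \<in> G)"

definition smoothed_vertices :: "'a set \<Rightarrow> ('a \<times> 'a) set \<Rightarrow> 'a set" where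
  "smoothed_vertices V G = {v \<in> V. indeg G v = 1 \<and> outdeg G v = 1}"

definition smooth_edges :: "'a set \<Rightarrow> ('a \<times> 'a) set \<Rightarrow> ('a \<times> 'a) set" where
  "smooth_edges V G =
     {(u, w). u \<in> V - smoothed_vertices V G \<and> w \<in> V - smoothed_vertices V G \<and>
        (\<exists>ps. walk G (u # ps @ [w]) \<and> set ps \<subseteq> smoothed_vertices V G)}"

definition support_network :: "'a set \<Rightarrow> ('a \<times> 'a) set \<Rightarrow> 'a set \<Rightarrow> ('a \<times> 'a) set \<Rightarrow> bool" where
  "support_network V E X G \<longleftrightarrow>
     G \<subseteq> E \<and> rbpn (V - smoothed_vertices V G) (smooth_edges V G) X"

definition support_networks :: "'a set \<Rightarrow> ('a \<times> 'a) set \<Rightarrow> 'a set \<Rightarrow> ('a \<times> 'a) set set" where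
  "support_networks V E X = {G. support_network V E X G}"

definition zigzag_order :: "('a \<times> 'a) list \<Rightarrow> bool" where
  "zigzag_order es \<longleftrightarrow> es \<noteq> [] \<and> distinct es \<and>
     (\<forall>i. Suc i < length es \<longrightarrow>
        fst (es ! i) = fst (es ! Suc i) \<or> snd (es ! i) = snd (es ! Suc i))"

definition zigzag_trail :: "('a \<times> 'a) set \<Rightarrow> ('a \<times> 'a) set \<Rightarrow> bool" where
  "zigzag_trail E Z \<longleftrightarrow> Z \<subseteq> E \<and> (\<exists>es. set es = Z \<and> zigzag_order es)"

definition maximal_zigzag_trail :: "('a \<times> 'a) set \<Rightarrow> ('a \<times> 'a) set \<Rightarrow> bool" where
  "maximal_zigzag_trail E Z \<longleftrightarrow>
     zigzag_trail E Z \<and> \<not> (\<exists>Z'. zigzag_trail E Z' \<and> Z \<subset> Z')"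

text \<open>Crown: v0 < v1 > v2 < ... > v_m = v0, where a < b denotes the edge (b, a).\<close>
definition crown :: "('a \<times> 'a) set \<Rightarrow> ('a \<times> 'a) set \<Rightarrow> bool" where
  "crown E Z \<longleftrightarrow> maximal_zigzag_trail E Z \<and> even (card Z) \<and> card Z \<ge> 4 \<and>
     (\<exists>vs. length vs = card Z \<and>
        Z = {(vs ! i, vs ! (i - 1)) | i. i < card Z \<and> odd i}
          \<union> {(vs ! i, vs ! ((i + 1) mod card Z)) | i. i < card Z \<and> odd i})"

definition fence :: "('a \<times> 'a) set \<Rightarrow> ('a \<times> 'a) set \<Rightarrow> bool" where
  "fence E Z \<longleftrightarrow> maximal_zigzag_trail E Z \<and> \<not> crown E Z"

fun lucas :: "nat \<Rightarrow> nat" where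
  "lucas 0 = 2"
| "lucas (Suc 0) = 1"
| "lucas (Suc (Suc n)) = lucas (Suc n) + lucas n"

definition golden_ratio :: real where
  "golden_ratio = (1 + sqrt 5) / 2"

end

theory Submission
  imports Defs
begin

(* A subgraph G of N is a support network exactly when it keeps an out-edge at every vertex
   with an out-edge in N and an in-edge at every vertex with an in-edge in N, i.e. when G covers
   every tail and every head of an edge of N (an "end cover"): an uncovered head would become a
   second root after smoothing, an uncovered tail a new leaf, and smoothing along kept edges
   preserves everything else.
   As in- and out-degrees are at most two, an edge shares its tail (its head) with at most one
   other edge, so all edges sharing an end with a maximal zig-zag trail belong to it. Hence the
   covering conditions of distinct trails are independent and the number of end covers is the
   product over the trails. Listing a trail in zig-zag order, a subset is an end cover iff it
   never omits two consecutive edges and, for a fence, contains both end edges; such subsets are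
   counted by F_m, and for a crown, where the condition is cyclic, by L_m. Finally
   phi^(m-2) <= F_m, L_m <= 2 phi^m, so the product is phi^|E(N)| up to a factor depending only
   on the number of trails. *)

section \<open>Words without two consecutive zeros\<close>

(* Indicator words, along a zig-zag order, of the end covers of a fence and of a crown. *)
definition fence_words :: "nat \<Rightarrow> bool list set" where
  "fence_words n = {bs. length bs = n \<and> successively (\<or>) bs \<and> hd bs \<and> last bs}"

definition crown_words :: "nat \<Rightarrow> bool list set" where
  "crown_words n = {bs. length bs = n \<and> (\<forall>i<n. bs ! i \<or> bs ! (Suc i mod n))}"

lemma finite_bool_lists_length: "finite {bs :: bool list. length bs = n \<and> P bs}"
  using finite_lists_length_eq[of "UNIV :: bool set" n] by (rule rev_finite_subset) auto

lemma fence_words_Suc_Suc_Suc: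
  "fence_words (Suc (Suc (Suc n))) =
     Cons True ` fence_words (Suc (Suc n)) \<union> (\<lambda>bs. True # False # bs) ` fence_words (Suc n)"
  (is "?L = ?R")
proof
  show "?L \<subseteq> ?R"
  proof
    fix bs assume bs: "bs \<in> ?L"
    then obtain a b c xs where "bs = a # b # c # xs" "length xs = n"
      by (auto simp: fence_words_def length_Suc_conv)
    with bs show "bs \<in> ?R"
      by (cases b) (auto simp: fence_words_def)
  qed
  show "?R \<subseteq> ?L"
    by (auto simp: fence_words_def successively_Cons length_Suc_conv)
qed

lemma card_fence_words: "card (fence_words (Suc n)) = fib (Suc n)"
proof (induction n rule: fib.induct)
  case 1
  have "fence_words 1 = {[True]}"
    by (auto simp: fence_words_def length_Suc_conv)
  then show ?case by simp
next
  case 2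
  have "fence_words 2 = {[True, True]}"
    by (auto simp: fence_words_def length_Suc_conv numeral_2_eq_2)
  then show ?case by (simp add: numeral_2_eq_2)
next
  case (3 n)
  have "card (fence_words (Suc (Suc (Suc n)))) =
      card (Cons True ` fence_words (Suc (Suc n))) + card ((\<lambda>bs. True # False # bs) ` fence_words (Suc n))"
    unfolding fence_words_Suc_Suc_Suc
    by (rule card_Un_disjoint) (auto simp: fence_words_def finite_bool_lists_length)
  also have "\<dots> = fib (Suc (Suc n)) + fib (Suc n)"
    using 3 by (simp add: card_image inj_on_def)
  finally show ?case by simp
qed

lemma fence_words_eq_padded:
  "fence_words (Suc (Suc n)) = (\<lambda>bs. True # bs @ [True]) ` {bs. length bs = n \<and> successively (\<or>) bs}"
  (is "?L = ?R")
proof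
  show "?L \<subseteq> ?R"
  proof
    fix bs assume bs: "bs \<in> ?L"
    then obtain a xs where "bs = a # xs" "length xs = Suc n"
      by (auto simp: fence_words_def length_Suc_conv)
    moreover from this obtain ys b where "xs = ys @ [b]"
      by (metis length_Suc_conv_rev)
    ultimately show "bs \<in> ?R"
      using bs by (auto simp: fence_words_def successively_append_iff successively_Cons)
  qed
  show "?R \<subseteq> ?L"
    by (auto simp: fence_words_def successively_append_iff successively_Cons)
qed

lemma lucas_conv_fib: "lucas (Suc n) = fib (Suc (Suc n)) + fib n"
  by (induction n rule: fib.induct) auto

lemma crown_words_conv:
  assumes "length bs = Suc n"
  shows "bs \<in> crown_words (Suc n) \<longleftrightarrow> successively (\<or>) bs \<and> (last bs \<or> hd bs)"
proof -
  have "bs \<noteq> []"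
    using assms by auto
  then have "hd bs = bs ! 0" "last bs = bs ! n"
    by (simp_all add: hd_conv_nth last_conv_nth assms)
  moreover have "(\<forall>i<Suc n. bs ! i \<or> bs ! (Suc i mod Suc n)) \<longleftrightarrow>
        (\<forall>i<n. bs ! i \<or> bs ! Suc i) \<and> (bs ! n \<or> bs ! 0)"
    by (auto simp: All_less_Suc)
  ultimately show ?thesis
    using assms by (auto simp: crown_words_def successively_conv_nth)
qed

lemma card_crown_words: "card (crown_words (Suc (Suc n))) = lucas (Suc (Suc n))"
proof -
  have split: "crown_words (Suc (Suc n)) =
      Cons True ` {bs. length bs = Suc n \<and> successively (\<or>) bs} \<union> Cons False ` fence_words (Suc n)"
    (is "?L = ?R")
  proof
    show "?L \<subseteq> ?R"
    proof
      fix bs assume bs: "bs \<in> ?L"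
      then obtain a xs where "bs = a # xs" "length xs = Suc n"
        by (auto simp: crown_words_def length_Suc_conv)
      with bs show "bs \<in> ?R"
        using crown_words_conv[of bs "Suc n"]
        by (cases a; cases xs) (auto simp: fence_words_def)
    qed
    show "?R \<subseteq> ?L"
    proof
      fix bs assume "bs \<in> ?R"
      then obtain a xs where bs: "bs = a # xs" "length xs = Suc n" "successively (\<or>) xs"
        and "\<not> a \<longrightarrow> hd xs \<and> last xs"
        by (auto simp: fence_words_def)
      then show "bs \<in> ?L"
        using crown_words_conv[of bs "Suc n"] by (cases xs) (auto simp: successively_Cons)
    qed
  qed
  have "card {bs. length bs = Suc n \<and> successively (\<or>) bs} = fib (Suc (Suc (Suc n)))"
    using card_fence_words[of "Suc (Suc n)"] fence_words_eq_padded[of "Suc n"]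
    by (simp add: card_image inj_on_def)
  moreover have "card (Cons False ` fence_words (Suc n)) = fib (Suc n)"
    by (simp add: card_image card_fence_words)
  moreover have "finite (fence_words (Suc n))"
    unfolding fence_words_def by (rule finite_bool_lists_length)
  ultimately have "card ?R = fib (Suc (Suc (Suc n))) + fib (Suc n)"
    by (subst card_Un_disjoint) (auto simp: card_image finite_bool_lists_length)
  then show ?thesis
    using split lucas_conv_fib[of "Suc n"] by simp
qed

section \<open>Zig-zag trails in graphs of degree at most two\<close>

definition share_end :: "'a \<times> 'a \<Rightarrow> 'a \<times> 'a \<Rightarrow> bool" where
  "share_end e f \<longleftrightarrow> fst e = fst f \<or> snd e = snd f"

(* Formulated without cardinalities, so that no finiteness assumption is needed. *)
definition degree_le_2 :: "('a \<times> 'a) set \<Rightarrow> bool" where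
  "degree_le_2 E \<longleftrightarrow> (\<forall>a\<in>E. \<forall>b\<in>E. \<forall>c\<in>E.
     (fst a = fst b \<and> fst a = fst c \<or> snd a = snd b \<and> snd a = snd c) \<longrightarrow> a = b \<or> a = c \<or> b = c)"

definition end_covers :: "('a \<times> 'a) set \<Rightarrow> ('a \<times> 'a) set set" where
  "end_covers E = {G. G \<subseteq> E \<and> fst ` G = fst ` E \<and> snd ` G = snd ` E}"

lemma share_end_sym: "share_end e f \<longleftrightarrow> share_end f e"
  by (auto simp: share_end_def)

lemma degree_le_2_subset: "degree_le_2 E \<Longrightarrow> F \<subseteq> E \<Longrightarrow> degree_le_2 F"
  unfolding degree_le_2_def by blast

lemma end_covers_iff:
  "G \<in> end_covers E \<longleftrightarrow> G \<subseteq> E \<and> (\<forall>e\<in>E. (\<exists>g\<in>G. fst g = fst e) \<and> (\<exists>g\<in>G. snd g = snd e))"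
proof -
  have "f ` G = f ` E \<longleftrightarrow> (\<forall>e\<in>E. \<exists>g\<in>G. f g = f e)" if "G \<subseteq> E" for f :: "'a \<times> 'a \<Rightarrow> 'a"
  proof -
    have "f ` G = f ` E \<longleftrightarrow> f ` E \<subseteq> f ` G"
      using that by blast
    also have "\<dots> \<longleftrightarrow> (\<forall>e\<in>E. \<exists>g\<in>G. f g = f e)"
      by (auto simp: image_subset_iff image_iff eq_commute)
    finally show ?thesis .
  qed
  then show ?thesis
    unfolding end_covers_def by blast
qed

lemma degree_le_2D:
  assumes "degree_le_2 E" "a \<in> E" "b \<in> E" "c \<in> E" "a \<noteq> b" "a \<noteq> c" "b \<noteq> c"
  shows "\<not> (fst b = fst a \<and> fst c = fst a)" "\<not> (snd b = snd a \<and> snd c = snd a)"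
proof -
  have "fst a = fst b \<and> fst a = fst c \<or> snd a = snd b \<and> snd a = snd c \<longrightarrow> a = b \<or> a = c \<or> b = c"
    using assms(1-4) unfolding degree_le_2_def by blast
  then show "\<not> (fst b = fst a \<and> fst c = fst a)" "\<not> (snd b = snd a \<and> snd c = snd a)"
    using assms(5-7) by auto
qed

lemma degree_le_2_opposite_ends:
  assumes "degree_le_2 E" "a \<in> E" "b \<in> E" "c \<in> E" "a \<noteq> b" "a \<noteq> c" "b \<noteq> c"
    and "share_end a b" "share_end a c"
  shows "fst b = fst a \<and> snd c = snd a \<or> snd b = snd a \<and> fst c = fst a"
  using degree_le_2D[OF assms(1-7)] assms(8,9) unfolding share_end_def by auto

lemma end_cover_hits_shared_pair:
  assumes "degree_le_2 E" "G \<in> end_covers E" "a \<in> E" "b \<in> E" "a \<noteq> b" "share_end a b"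
  shows "a \<in> G \<or> b \<in> G"
proof (rule ccontr)
  assume "\<not> (a \<in> G \<or> b \<in> G)"
  moreover obtain g h where "g \<in> G" "h \<in> G" "fst g = fst a" "snd h = snd a" "G \<subseteq> E"
    using assms(2,3) unfolding end_covers_iff by blast
  ultimately have "g \<in> E" "h \<in> E" "a \<noteq> g" "b \<noteq> g" "a \<noteq> h" "b \<noteq> h"
    and "fst g = fst a" "snd h = snd a"
    by auto
  then show False
    using degree_le_2D[OF assms(1,3,4) \<open>g \<in> E\<close> assms(5)] degree_le_2D[OF assms(1,3,4) \<open>h \<in> E\<close> assms(5)]
      assms(6) unfolding share_end_def by auto
qed

lemma zigzag_order_conv:
  "zigzag_order es \<longleftrightarrow> es \<noteq> [] \<and> distinct es \<and> successively share_end es"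
  unfolding zigzag_order_def successively_conv_nth share_end_def by simp

lemma zigzag_order_Cons:
  "zigzag_order es \<Longrightarrow> f \<notin> set es \<Longrightarrow> share_end f (hd es) \<Longrightarrow> zigzag_order (f # es)"
  by (simp add: zigzag_order_conv successively_Cons)

lemma zigzag_order_snoc:
  "zigzag_order es \<Longrightarrow> f \<notin> set es \<Longrightarrow> share_end (last es) f \<Longrightarrow> zigzag_order (es @ [f])"
  by (simp add: zigzag_order_conv successively_append_iff)

lemma zigzag_order_rev: "zigzag_order (rev es) \<longleftrightarrow> zigzag_order es"
  by (simp add: zigzag_order_conv share_end_sym)

lemma zigzag_order_subset_closed:
  assumes "zigzag_order es" "\<forall>e\<in>C. \<forall>f\<in>set es. share_end e f \<longrightarrow> f \<in> C" "set es \<inter> C \<noteq> {}"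
  shows "set es \<subseteq> C"
proof -
  have step: "es ! i \<in> C \<longleftrightarrow> es ! Suc i \<in> C" if i: "Suc i < length es" for i
  proof -
    have "share_end (es ! i) (es ! Suc i)"
      using assms(1) i by (simp add: zigzag_order_conv successively_nth)
    moreover have "es ! i \<in> set es" "es ! Suc i \<in> set es"
      using i by simp_all
    ultimately show ?thesis
      using assms(2) share_end_sym by blast
  qed
  have all: "es ! i \<in> C \<longleftrightarrow> es ! 0 \<in> C" if "i < length es" for i
    using that by (induction i) (auto simp: step)
  obtain x where "x \<in> set es" "x \<in> C"
    using assms(3) by blast
  then obtain k where "k < length es" "es ! k \<in> C"
    by (auto simp: in_set_conv_nth)
  then have "es ! 0 \<in> C"
    using all by blast
  then show ?thesis
    using all by (metis in_set_conv_nth subsetI)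
qed

(* A listing of one or two edges does not close up, although its end edges share an end. *)
definition closes_up :: "('a \<times> 'a) list \<Rightarrow> bool" where
  "closes_up es \<longleftrightarrow> 3 \<le> length es \<and> share_end (last es) (hd es)"

locale zigzag_listing =
  fixes E :: "('a \<times> 'a) set" and es :: "('a \<times> 'a) list"
  assumes degree: "degree_le_2 E" and edges: "set es \<subseteq> E" and zigzag: "zigzag_order es"
begin

lemma distinct: "distinct es" and nonempty: "es \<noteq> []"
  using zigzag by (auto simp: zigzag_order_conv)

lemma nth_eq_iff: "i < length es \<Longrightarrow> j < length es \<Longrightarrow> es ! i = es ! j \<longleftrightarrow> i = j"
  using distinct by (simp add: nth_eq_iff_index_eq)

lemma share_end_Suc: "Suc i < length es \<Longrightarrow> share_end (es ! i) (es ! Suc i)"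
  using zigzag by (simp add: zigzag_order_conv successively_nth)

lemma interior_ends:
  assumes "0 < i" "Suc i < length es"
  shows "fst (es ! (i - 1)) = fst (es ! i) \<and> snd (es ! Suc i) = snd (es ! i) \<or>
         snd (es ! (i - 1)) = snd (es ! i) \<and> fst (es ! Suc i) = fst (es ! i)"
proof (rule degree_le_2_opposite_ends[OF degree])
  show "es ! i \<in> E" "es ! (i - 1) \<in> E" "es ! Suc i \<in> E"
    using assms edges by auto
  show "es ! i \<noteq> es ! (i - 1)" "es ! i \<noteq> es ! Suc i" "es ! (i - 1) \<noteq> es ! Suc i"
    using assms by (auto simp: nth_eq_iff)
  show "share_end (es ! i) (es ! (i - 1))" "share_end (es ! i) (es ! Suc i)"
    using share_end_Suc[of "i - 1"] share_end_Suc[of i] assms by (auto simp: share_end_sym)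
qed

lemma interior_neighbour:
  assumes "0 < i" "Suc i < length es" "f \<in> E" "share_end (es ! i) f"
  shows "f \<in> {es ! (i - 1), es ! i, es ! Suc i}"
proof (rule ccontr)
  assume "f \<notin> {es ! (i - 1), es ! i, es ! Suc i}"
  then have f: "es ! i \<noteq> f" "es ! (i - 1) \<noteq> f" "es ! Suc i \<noteq> f"
    by auto
  have "es ! i \<in> E" "es ! (i - 1) \<in> E" "es ! Suc i \<in> E"
    using assms edges by auto
  moreover have "es ! i \<noteq> es ! (i - 1)" "es ! i \<noteq> es ! Suc i"
    using assms by (auto simp: nth_eq_iff)
  ultimately show False
    using interior_ends[OF assms(1,2)] assms(4) f
      degree_le_2D[OF degree \<open>es ! i \<in> E\<close> \<open>es ! (i - 1) \<in> E\<close> assms(3)]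
      degree_le_2D[OF degree \<open>es ! i \<in> E\<close> \<open>es ! Suc i \<in> E\<close> assms(3)]
    unfolding share_end_def by auto
qed

end

lemma maximal_zigzag_trail_no_extension:
  assumes "maximal_zigzag_trail E Z" "f \<in> E - Z" "set fs = insert f Z"
  shows "\<not> zigzag_order fs"
proof
  assume "zigzag_order fs"
  then have "zigzag_trail E (insert f Z)"
    using assms unfolding maximal_zigzag_trail_def zigzag_trail_def by blast
  moreover have "Z \<subset> insert f Z"
    using assms(2) by blast
  ultimately show False
    using assms(1) unfolding maximal_zigzag_trail_def by blast
qed

lemma maximal_zigzag_trail_closed:
  assumes max: "maximal_zigzag_trail E Z" and "degree_le_2 E"
    and "e \<in> Z" "f \<in> E" "share_end e f"
  shows "f \<in> Z"
proof (rule ccontr)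
  assume f: "f \<notin> Z"
  obtain es where es: "set es = Z" "zigzag_order es" and "Z \<subseteq> E"
    using max unfolding maximal_zigzag_trail_def zigzag_trail_def by auto
  interpret zigzag_listing E es
    using assms(2) es \<open>Z \<subseteq> E\<close> by unfold_locales auto
  have no_extension: "\<not> zigzag_order fs" if "set fs = insert f Z" for fs
    using maximal_zigzag_trail_no_extension[OF max] that f assms(4) by blast
  obtain i where i: "i < length es" "es ! i = e"
    using assms(3) es(1) by (metis in_set_conv_nth)
  consider "i = 0" | "i = length es - 1" | "0 < i" "Suc i < length es"
    using i(1) by linarith
  then show False
  proof cases
    case 1
    then have "zigzag_order (f # es)"
      using zigzag_order_Cons[OF zigzag] f es(1) i assms(5) nonempty
      by (simp add: hd_conv_nth share_end_sym)
    then show False using no_extension[of "f # es"] es(1) by simp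
  next
    case 2
    then have "zigzag_order (es @ [f])"
      using zigzag_order_snoc[OF zigzag] f es(1) i assms(5) nonempty by (simp add: last_conv_nth)
    then show False using no_extension[of "es @ [f]"] es(1) by simp
  next
    case 3
    then have "f \<in> set es"
      using interior_neighbour[of i f] i assms(4,5) by auto
    then show False using f es(1) by simp
  qed
qed

lemma maximal_zigzag_trail_absorbs:
  assumes "maximal_zigzag_trail E Z" "degree_le_2 E" "zigzag_trail E W" "W \<inter> Z \<noteq> {}"
  shows "W \<subseteq> Z"
proof -
  obtain ws where ws: "set ws = W" "zigzag_order ws" "W \<subseteq> E"
    using assms(3) unfolding zigzag_trail_def by auto
  have "\<forall>e\<in>Z. \<forall>f\<in>set ws. share_end e f \<longrightarrow> f \<in> Z"
    using maximal_zigzag_trail_closed[OF assms(1,2)] ws by blast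
  then show ?thesis
    using zigzag_order_subset_closed[OF ws(2)] assms(4) ws(1) by blast
qed

section \<open>End covers of a single maximal zig-zag trail\<close>

lemma card_subsets_conv_words:
  assumes "distinct es" "W \<subseteq> {bs. length bs = length es}"
  shows "card {G. G \<subseteq> set es \<and> map (\<lambda>e. e \<in> G) es \<in> W} = card W"
proof (rule bij_betw_same_card)
  let ?word = "\<lambda>G. map (\<lambda>e. e \<in> G) es" and ?set = "\<lambda>bs. {es ! i |i. i < length es \<and> bs ! i}"
  show "bij_betw ?word {G. G \<subseteq> set es \<and> ?word G \<in> W} W"
  proof (rule bij_betw_byWitness[where f' = ?set])
    show "\<forall>G\<in>{G. G \<subseteq> set es \<and> ?word G \<in> W}. ?set (?word G) = G"
    proof (intro ballI equalityI subsetI)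
      fix G x assume G: "G \<in> {G. G \<subseteq> set es \<and> ?word G \<in> W}" and "x \<in> G"
      then have "x \<in> set es"
        by auto
      then obtain i where "i < length es" "x = es ! i"
        by (auto simp: in_set_conv_nth)
      then show "x \<in> ?set (?word G)"
        using \<open>x \<in> G\<close> by auto
    qed auto
    show "\<forall>bs\<in>W. ?word (?set bs) = bs"
    proof
      fix bs assume "bs \<in> W"
      then have "length bs = length es"
        using assms(2) by auto
      moreover have "es ! j \<in> ?set bs \<longleftrightarrow> bs ! j" if "j < length es" for j
        using that assms(1) by (auto simp: nth_eq_iff_index_eq)
      ultimately show "?word (?set bs) = bs"
        by (simp add: list_eq_iff_nth_eq)
    qed
    show "?word ` {G. G \<subseteq> set es \<and> ?word G \<in> W} \<subseteq> W"
      by auto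
    show "?set ` W \<subseteq> {G. G \<subseteq> set es \<and> ?word G \<in> W}"
      using \<open>\<forall>bs\<in>W. ?word (?set bs) = bs\<close> by auto
  qed
qed

lemma closes_up_rev: "closes_up (rev es) \<longleftrightarrow> closes_up es"
  by (cases es) (auto simp: closes_up_def share_end_sym last_rev hd_rev)

context zigzag_listing
begin

lemma open_hd_neighbour:
  assumes "\<not> closes_up es" "f \<in> set es" "f \<noteq> hd es" "share_end (hd es) f"
  shows "f = es ! 1"
proof -
  obtain j where j: "j < length es" "f = es ! j"
    using assms(2) by (auto simp: in_set_conv_nth)
  have hd: "hd es = es ! 0"
    using nonempty by (simp add: hd_conv_nth)
  then have "j \<noteq> 0"
    using j assms(3) by (cases "j = 0") auto
  then consider "j = 1" | "j = length es - 1" "j \<noteq> 1" | "0 < j" "Suc j < length es"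
    using j by linarith
  then show ?thesis
  proof cases
    case 2
    then have "closes_up es"
      using j assms(4) nonempty \<open>j \<noteq> 0\<close> unfolding closes_up_def
      by (auto simp: last_conv_nth share_end_sym)
    then show ?thesis
      using assms(1) by simp
  next
    case 3
    have "hd es \<in> E"
      using edges nonempty by auto
    moreover have "share_end (es ! j) (hd es)"
      using assms(4) j share_end_sym by metis
    ultimately have "hd es \<in> {es ! (j - 1), es ! j, es ! Suc j}"
      by (rule interior_neighbour[OF 3])
    then obtain k where k: "k \<in> {j - 1, j, Suc j}" "es ! 0 = es ! k"
      using hd by auto
    moreover have "k < length es"
      using k(1) 3 by auto
    ultimately have "k = 0"
      using nth_eq_iff[of 0 k] nonempty by auto
    then have "j = 1"
      using k 3 by auto
    then show ?thesis
      using j by simp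
  qed (use j in simp)
qed

lemma hd_in_end_cover:
  assumes "\<not> closes_up es" "G \<in> end_covers (set es)"
  shows "hd es \<in> G"
proof (rule ccontr)
  assume hd: "hd es \<notin> G"
  obtain g h where "g \<in> G" "h \<in> G" "fst g = fst (hd es)" "snd h = snd (hd es)" "G \<subseteq> set es"
    using assms(2) nonempty unfolding end_covers_iff by (meson hd_in_set)
  moreover from this have "g = es ! 1" "h = es ! 1"
    using open_hd_neighbour[OF assms(1), of g] open_hd_neighbour[OF assms(1), of h] hd
    by (auto simp: share_end_def)
  ultimately have "hd es = g"
    by (simp add: prod_eq_iff)
  then show False
    using hd \<open>g \<in> G\<close> by simp
qed

lemma last_in_end_cover:
  assumes "\<not> closes_up es" "G \<in> end_covers (set es)"
  shows "last es \<in> G"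
proof -
  interpret rev: zigzag_listing E "rev es"
    using degree edges zigzag by unfold_locales (auto simp: zigzag_order_rev)
  show ?thesis
    using rev.hd_in_end_cover assms nonempty by (simp add: closes_up_rev hd_rev)
qed

lemma end_covers_open_conv:
  assumes "\<not> closes_up es"
  shows "end_covers (set es) = {G. G \<subseteq> set es \<and> map (\<lambda>e. e \<in> G) es \<in> fence_words (length es)}"
proof -
  have degree_es: "degree_le_2 (set es)"
    using degree_le_2_subset[OF degree edges] .
  show ?thesis
  proof (intro set_eqI iffI)
    fix G assume G: "G \<in> end_covers (set es)"
    have "es ! i \<in> G \<or> es ! Suc i \<in> G" if "Suc i < length es" for i
      using end_cover_hits_shared_pair[OF degree_es G] share_end_Suc[OF that] that
      by (simp add: nth_eq_iff)
    then have "successively (\<lambda>a b. a \<in> G \<or> b \<in> G) es"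
      by (simp add: successively_conv_nth)
    then show "G \<in> {G. G \<subseteq> set es \<and> map (\<lambda>e. e \<in> G) es \<in> fence_words (length es)}"
      using G hd_in_end_cover[OF assms G] last_in_end_cover[OF assms G] nonempty
      by (simp add: fence_words_def successively_map hd_map last_map end_covers_def)
  next
    fix G assume "G \<in> {G. G \<subseteq> set es \<and> map (\<lambda>e. e \<in> G) es \<in> fence_words (length es)}"
    then have sub: "G \<subseteq> set es" and hd: "es ! 0 \<in> G" and last: "es ! (length es - 1) \<in> G"
      and pairs: "\<And>i. Suc i < length es \<Longrightarrow> es ! i \<in> G \<or> es ! Suc i \<in> G"
      using nonempty
      by (auto simp: fence_words_def successively_map successively_conv_nth hd_map last_map
          hd_conv_nth last_conv_nth)
    show "G \<in> end_covers (set es)"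
      unfolding end_covers_iff
    proof (rule conjI[OF sub], intro ballI)
      fix e assume "e \<in> set es"
      then obtain i where i: "i < length es" "e = es ! i"
        by (auto simp: in_set_conv_nth)
      show "(\<exists>g\<in>G. fst g = fst e) \<and> (\<exists>g\<in>G. snd g = snd e)"
      proof (cases "e \<in> G")
        case False
        then have "i \<noteq> 0" "i \<noteq> length es - 1"
          using i hd last by metis+
        then have "0 < i" "Suc i < length es"
          using i by linarith+
        then show ?thesis
          using interior_ends pairs[of "i - 1"] pairs[of i] False i by auto
      qed blast
    qed
  qed
qed

lemma card_end_covers_open:
  assumes "\<not> closes_up es"
  shows "card (end_covers (set es)) = fib (length es)"
proof -
  have "card (end_covers (set es)) = card (fence_words (length es))"
    unfolding end_covers_open_conv[OF assms]
    by (rule card_subsets_conv_words[OF distinct]) (auto simp: fence_words_def)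
  also have "\<dots> = fib (length es)"
    using nonempty card_fence_words[of "length es - 1"] by simp
  finally show ?thesis .
qed

end

lemma Suc_mod_neq: "2 \<le> m \<Longrightarrow> i < m \<Longrightarrow> Suc i mod m \<noteq> i"
  by (cases "Suc i = m") auto

lemma Suc_Suc_mod_neq: "3 \<le> m \<Longrightarrow> i < m \<Longrightarrow> Suc (Suc i) mod m \<noteq> i"
proof -
  assume "3 \<le> m" "i < m"
  then consider "Suc (Suc i) < m" | "Suc (Suc i) = m" | "Suc (Suc i) = Suc m"
    by linarith
  then show ?thesis
  proof cases
    case 3
    then have "Suc (Suc i) mod m = 1"
      using \<open>3 \<le> m\<close> by (simp add: mod_Suc)
    then show ?thesis
      using 3 \<open>3 \<le> m\<close> by simp
  qed (use \<open>3 \<le> m\<close> in auto)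
qed

lemma Suc_mod_surj: "i < m \<Longrightarrow> \<exists>j<m. Suc j mod m = i"
  by (cases i) (auto intro: exI[of _ "m - 1"] exI[of _ "i - 1"])

locale closed_zigzag_listing = zigzag_listing +
  assumes closes: "closes_up es"
begin

abbreviation succ :: "nat \<Rightarrow> nat" where
  "succ i \<equiv> Suc i mod length es"

lemma length_ge_3: "3 \<le> length es"
  using closes by (simp add: closes_up_def)

lemma succ_less: "succ i < length es"
  using nonempty by simp

lemma share_end_succ:
  assumes "i < length es"
  shows "share_end (es ! i) (es ! succ i)"
proof (cases "Suc i < length es")
  case True
  then show ?thesis
    using share_end_Suc by simp
next
  case False
  then have "Suc i = length es"
    using assms by simp
  then have "i = length es - 1" "succ i = 0"
    by auto
  then show ?thesis
    using closes nonempty by (simp add: closes_up_def last_conv_nth hd_conv_nth)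
qed

lemma succ_distinct:
  assumes "j < length es"
  shows "succ j \<noteq> j" "succ (succ j) \<noteq> j" "succ (succ j) \<noteq> succ j"
proof -
  show "succ j \<noteq> j" "succ (succ j) \<noteq> succ j"
    using Suc_mod_neq[of "length es"] length_ge_3 assms succ_less by auto
  show "succ (succ j) \<noteq> j"
    using Suc_Suc_mod_neq[of "length es" j] length_ge_3 assms by (simp add: mod_Suc_eq)
qed

lemma opposite_ends_succ:
  assumes "j < length es"
  shows "fst (es ! j) = fst (es ! succ j) \<and> snd (es ! succ (succ j)) = snd (es ! succ j) \<or>
         snd (es ! j) = snd (es ! succ j) \<and> fst (es ! succ (succ j)) = fst (es ! succ j)"
proof (rule degree_le_2_opposite_ends[OF degree])
  show "es ! succ j \<in> E" "es ! j \<in> E" "es ! succ (succ j) \<in> E"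
    using assms edges succ_less by auto
  show "es ! succ j \<noteq> es ! j" "es ! succ j \<noteq> es ! succ (succ j)" "es ! j \<noteq> es ! succ (succ j)"
    using succ_distinct[OF assms] nth_eq_iff assms succ_less by metis+
  show "share_end (es ! succ j) (es ! j)" "share_end (es ! succ j) (es ! succ (succ j))"
    using share_end_succ[OF assms] share_end_succ[OF succ_less] share_end_sym by blast+
qed

lemma end_covers_closed_conv:
  "end_covers (set es) = {G. G \<subseteq> set es \<and> map (\<lambda>e. e \<in> G) es \<in> crown_words (length es)}"
proof -
  have degree_es: "degree_le_2 (set es)"
    using degree_le_2_subset[OF degree edges] .
  show ?thesis
  proof (intro set_eqI iffI)
    fix G assume G: "G \<in> end_covers (set es)"
    have "es ! i \<in> G \<or> es ! succ i \<in> G" if "i < length es" for i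
      using end_cover_hits_shared_pair[OF degree_es G] share_end_succ[OF that] that succ_less
        succ_distinct(1)[OF that] nth_eq_iff[OF that succ_less] by auto
    then show "G \<in> {G. G \<subseteq> set es \<and> map (\<lambda>e. e \<in> G) es \<in> crown_words (length es)}"
      using G by (simp add: crown_words_def end_covers_def succ_less)
  next
    fix G assume "G \<in> {G. G \<subseteq> set es \<and> map (\<lambda>e. e \<in> G) es \<in> crown_words (length es)}"
    then have sub: "G \<subseteq> set es" and pairs: "\<And>i. i < length es \<Longrightarrow> es ! i \<in> G \<or> es ! succ i \<in> G"
      by (auto simp: crown_words_def succ_less)
    show "G \<in> end_covers (set es)"
      unfolding end_covers_iff
    proof (rule conjI[OF sub], intro ballI)
      fix e assume "e \<in> set es"
      then obtain i where i: "i < length es" "e = es ! i"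
        by (auto simp: in_set_conv_nth)
      then obtain j where j: "j < length es" "succ j = i"
        using Suc_mod_surj by blast
      show "(\<exists>g\<in>G. fst g = fst e) \<and> (\<exists>g\<in>G. snd g = snd e)"
      proof (cases "e \<in> G")
        case False
        then have "es ! j \<in> G" "es ! succ i \<in> G"
          using pairs[OF j(1)] pairs[OF i(1)] i j by auto
        then show ?thesis
          using opposite_ends_succ[OF j(1)] i j by auto
      qed blast
    qed
  qed
qed

lemma card_end_covers_closed: "card (end_covers (set es)) = lucas (length es)"
proof -
  have "card (end_covers (set es)) = card (crown_words (length es))"
    unfolding end_covers_closed_conv
    by (rule card_subsets_conv_words[OF distinct]) (auto simp: crown_words_def)
  also have "\<dots> = lucas (length es)"
  proof -
    have "Suc (Suc (length es - 2)) = length es"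
      using length_ge_3 by simp
    then show ?thesis
      using card_crown_words[of "length es - 2"] by (simp only:)
  qed
  finally show ?thesis .
qed

end

section \<open>Crowns\<close>

lemma even_Suc_less: "even m \<Longrightarrow> even k \<Longrightarrow> k < m \<Longrightarrow> Suc k < m"
  by (metis Suc_lessI even_Suc)

lemma even_Suc_mod: "even m \<Longrightarrow> odd k \<Longrightarrow> k < m \<Longrightarrow> even (Suc k mod m)"
  by (cases "Suc k = m") auto

(* The k-th edge of the crown v_0 < v_1 > v_2 < ... with vertex list vs, in a zig-zag order in
   which edge k shares its tail with edge k + 1 for even k and its head for odd k. *)
definition crown_edge :: "'a list \<Rightarrow> nat \<Rightarrow> nat \<Rightarrow> 'a \<times> 'a" where
  "crown_edge vs m k = (if even k then (vs ! Suc k, vs ! k) else (vs ! k, vs ! (Suc k mod m)))"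

lemma crown_edges_conv:
  assumes "even m"
  shows "{(vs ! i, vs ! (i - 1)) |i. i < m \<and> odd i} \<union> {(vs ! i, vs ! ((i + 1) mod m)) |i. i < m \<and> odd i} =
    crown_edge vs m ` {..<m}" (is "?L = ?R")
proof (intro equalityI subsetI)
  fix e assume "e \<in> ?L"
  then consider i where "i < m" "odd i" "e = (vs ! i, vs ! (i - 1))"
    | i where "i < m" "odd i" "e = (vs ! i, vs ! ((i + 1) mod m))"
    by blast
  then show "e \<in> ?R"
  proof cases
    case 1
    then have "e = crown_edge vs m (i - 1)"
      by (simp add: crown_edge_def)
    then show ?thesis
      using 1 by auto
  next
    case 2
    then have "e = crown_edge vs m i"
      by (simp add: crown_edge_def)
    then show ?thesis
      using 2 by auto
  qed
next
  fix e assume "e \<in> ?R"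
  then obtain k where k: "k < m" "e = crown_edge vs m k"
    by blast
  show "e \<in> ?L"
  proof (cases "even k")
    case True
    then have "Suc k < m" "odd (Suc k)"
      using k(1) assms by (auto intro: even_Suc_less)
    then show ?thesis
      using k True by (auto simp: crown_edge_def)
  next
    case False
    then show ?thesis
      using k by (auto simp: crown_edge_def)
  qed
qed

lemma crown_iff:
  "crown E Z \<longleftrightarrow> maximal_zigzag_trail E Z \<and> even (card Z) \<and> 4 \<le> card Z \<and>
     (\<exists>vs. length vs = card Z \<and> Z = crown_edge vs (card Z) ` {..<card Z})"
proof -
  have "(\<exists>vs. length vs = card Z \<and> Z = {(vs ! i, vs ! (i - 1)) |i. i < card Z \<and> odd i} \<union>
        {(vs ! i, vs ! ((i + 1) mod card Z)) |i. i < card Z \<and> odd i}) \<longleftrightarrow>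
      (\<exists>vs. length vs = card Z \<and> Z = crown_edge vs (card Z) ` {..<card Z})" if "even (card Z)"
    by (simp only: crown_edges_conv[OF that])
  then show ?thesis
    unfolding crown_def by (intro iffI; elim conjE; intro conjI) simp_all
qed

lemma crown_edge_share_end:
  assumes "even m" "k < m"
  shows "share_end (crown_edge vs m k) (crown_edge vs m (Suc k mod m))"
proof (cases "even k")
  case True
  then have "Suc k < m"
    using assms by (auto intro: even_Suc_less)
  then show ?thesis
    using True by (simp add: crown_edge_def share_end_def)
next
  case False
  then have "even (Suc k mod m)"
    using assms by (auto intro: even_Suc_mod)
  then show ?thesis
    using False by (simp add: crown_edge_def share_end_def)
qed

lemma crown_closing_listing:
  assumes "even m" "4 \<le> m" "card (crown_edge vs m ` {..<m}) = m"
  shows "\<exists>cs. set cs = crown_edge vs m ` {..<m} \<and> zigzag_order cs \<and> closes_up cs"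
proof (intro exI conjI)
  let ?cs = "map (crown_edge vs m) [0..<m]"
  show set: "set ?cs = crown_edge vs m ` {..<m}"
    by (auto simp: lessThan_atLeast0)
  have "share_end (crown_edge vs m i) (crown_edge vs m (Suc i))" if "Suc i < m" for i
    using crown_edge_share_end[OF assms(1), of i] that by simp
  then have "successively share_end ?cs"
    by (simp add: successively_conv_nth)
  moreover have "distinct ?cs"
    using assms(3) set by (simp add: card_distinct)
  ultimately show "zigzag_order ?cs"
    using assms(2) by (auto simp: zigzag_order_conv)
  have "share_end (crown_edge vs m (m - 1)) (crown_edge vs m 0)"
    using crown_edge_share_end[OF assms(1), of "m - 1"] assms(2) by simp
  then show "closes_up ?cs"
    using assms(2) by (simp add: closes_up_def last_map hd_map)
qed

context closed_zigzag_listing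
begin

(* Each edge shares its tail with one cyclic neighbour and its head with the other. *)
lemma tail_junction_alternates:
  assumes "j < length es"
  shows "fst (es ! succ j) = fst (es ! succ (succ j)) \<longleftrightarrow> fst (es ! j) \<noteq> fst (es ! succ j)"
proof -
  have "es ! succ j \<noteq> es ! j" "es ! succ (succ j) \<noteq> es ! succ j"
    using succ_distinct[OF assms] nth_eq_iff[of "succ j" j] nth_eq_iff[of "succ (succ j)" "succ j"]
      assms succ_less by simp_all
  then show ?thesis
    using opposite_ends_succ[OF assms] by (auto simp: prod_eq_iff)
qed

lemma tail_junction_parity:
  "i < length es \<Longrightarrow> fst (es ! i) = fst (es ! succ i) \<longleftrightarrow> (fst (es ! 0) = fst (es ! succ 0) \<longleftrightarrow> even i)"
proof (induction i)
  case (Suc i)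
  then show ?case
    using tail_junction_alternates[of i] by simp
qed simp

lemma even_length: "even (length es)"
proof -
  let ?m = "length es"
  have "succ (?m - 1) = 0"
    using nonempty by simp
  then show ?thesis
    using tail_junction_alternates[of "?m - 1"] tail_junction_parity[of "?m - 1"] nonempty
    by auto
qed

lemma crown_pattern_tail_start:
  assumes "fst (es ! 0) = fst (es ! 1)"
  shows "\<exists>vs. length vs = length es \<and> set es = crown_edge vs (length es) ` {..<length es}"
proof (intro exI conjI)
  let ?m = "length es"
  define vs where "vs = map (\<lambda>k. if even k then snd (es ! k) else fst (es ! k)) [0..<?m]"
  show "length vs = ?m"
    by (simp add: vs_def)
  have junction: "fst (es ! k) = fst (es ! succ k) \<longleftrightarrow> even k" if "k < ?m" for k
    using tail_junction_parity[OF that] assms length_ge_3 by simp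
  have "es ! k = crown_edge vs ?m k" if k: "k < ?m" for k
  proof (cases "even k")
    case True
    then have "Suc k < ?m"
      using k even_length by (auto intro: even_Suc_less)
    then show ?thesis
      using True junction[OF k] k by (simp add: crown_edge_def vs_def prod_eq_iff)
  next
    case False
    then have "even (succ k)"
      using k even_length by (auto intro: even_Suc_mod)
    moreover have "snd (es ! k) = snd (es ! succ k)"
      using share_end_succ[OF k] junction[OF k] False by (simp add: share_end_def)
    ultimately show ?thesis
      using False k succ_less by (simp add: crown_edge_def vs_def prod_eq_iff)
  qed
  then have "crown_edge vs ?m ` {..<?m} = (!) es ` {..<?m}"
    by (intro image_cong) auto
  then show "set es = crown_edge vs ?m ` {..<?m}"
    by (simp add: lessThan_atLeast0 nth_image)
qed

lemma closed_zigzag_listing_rotate1: "closed_zigzag_listing E (rotate1 es)"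
proof
  show "degree_le_2 E" "set (rotate1 es) \<subseteq> E"
    using degree edges by auto
  obtain a rest where es: "es = a # rest"
    using nonempty by (cases es) auto
  then have "rest \<noteq> []"
    using length_ge_3 by auto
  then have "successively share_end rest" "share_end (last rest) a"
    using zigzag closes es by (auto simp: zigzag_order_conv closes_up_def successively_Cons)
  then have "successively share_end (rest @ [a])"
    by (simp add: successively_append_iff)
  then show "zigzag_order (rotate1 es)"
    using zigzag es by (simp add: zigzag_order_conv)
  have "share_end a (hd rest)"
    using share_end_Suc[of 0] length_ge_3 es \<open>rest \<noteq> []\<close> by (simp add: hd_conv_nth)
  then show "closes_up (rotate1 es)"
    using length_ge_3 es \<open>rest \<noteq> []\<close> by (simp add: closes_up_def)
qed

lemma crown_pattern: "\<exists>vs. length vs = length es \<and> set es = crown_edge vs (length es) ` {..<length es}"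
proof (cases "fst (es ! 0) = fst (es ! 1)")
  case True
  then show ?thesis
    by (rule crown_pattern_tail_start)
next
  case False
  interpret rotated: closed_zigzag_listing E "rotate1 es"
    by (rule closed_zigzag_listing_rotate1)
  have "rotate1 es ! 0 = es ! 1" "rotate1 es ! 1 = es ! 2"
    using nth_rotate1[of 0 es] nth_rotate1[of 1 es] length_ge_3 nonempty
    by (simp_all add: numeral_2_eq_2)
  then have "fst (rotate1 es ! 0) = fst (rotate1 es ! 1)"
    using tail_junction_alternates[of 0] False length_ge_3 nonempty by (simp add: numeral_2_eq_2)
  then show ?thesis
    using rotated.crown_pattern_tail_start by simp
qed

lemma two_neighbours:
  assumes "e \<in> set es"
  shows "\<exists>f\<in>set es. \<exists>g\<in>set es. f \<noteq> g \<and> f \<noteq> e \<and> g \<noteq> e \<and> share_end e f \<and> share_end e g"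
proof -
  obtain i where i: "i < length es" "e = es ! i"
    using assms by (auto simp: in_set_conv_nth)
  then obtain j where j: "j < length es" "succ j = i"
    using Suc_mod_surj by blast
  have "es ! j \<noteq> es ! succ i" "es ! j \<noteq> e" "es ! succ i \<noteq> e"
    using succ_distinct[OF j(1)] nth_eq_iff[of j "succ i"] nth_eq_iff[of j i] nth_eq_iff[of "succ i" i]
      j i succ_less by simp_all
  moreover have "share_end e (es ! j)" "share_end e (es ! succ i)"
    using share_end_succ[OF j(1)] share_end_succ[OF i(1)] i j share_end_sym by blast+
  moreover have "es ! j \<in> set es" "es ! succ i \<in> set es"
    using j(1) succ_less by simp_all
  ultimately show ?thesis
    by blast
qed

end

lemma (in closed_zigzag_listing) crown_if_maximal:
  assumes "maximal_zigzag_trail E (set es)"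
  shows "crown E (set es)"
proof -
  have "card (set es) = length es"
    by (rule distinct_card[OF distinct])
  moreover have "4 \<le> length es"
    using even_length length_ge_3 by presburger
  ultimately show ?thesis
    unfolding crown_iff using assms even_length crown_pattern by simp
qed

(* The first edge of an open listing has only one neighbour in the trail, whereas every edge of a
   closing listing has two. *)
lemma (in zigzag_listing) not_crown_if_open:
  assumes "\<not> closes_up es"
  shows "\<not> crown E (set es)"
proof
  assume "crown E (set es)"
  let ?m = "card (set es)"
  obtain vs where vs: "set es = crown_edge vs ?m ` {..<?m}" and "even ?m" "4 \<le> ?m"
    using \<open>crown E (set es)\<close> unfolding crown_iff by blast
  then have card: "card (crown_edge vs ?m ` {..<?m}) = ?m"
    by simp
  obtain cs where cs: "set cs = set es" "zigzag_order cs" "closes_up cs"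
    using crown_closing_listing[OF \<open>even ?m\<close> \<open>4 \<le> ?m\<close> card] vs by auto
  interpret cyclic: closed_zigzag_listing E cs
    using cs degree edges by unfold_locales auto
  obtain f g where "f \<in> set es" "g \<in> set es" "f \<noteq> g" "f \<noteq> hd es" "g \<noteq> hd es"
    "share_end (hd es) f" "share_end (hd es) g"
    using cyclic.two_neighbours[of "hd es"] cs(1) nonempty by auto
  then show False
    using open_hd_neighbour[OF assms, of f] open_hd_neighbour[OF assms, of g] by simp
qed

lemma card_end_covers_maximal_zigzag_trail:
  assumes "degree_le_2 E" "maximal_zigzag_trail E Z"
  shows "card (end_covers Z) = (if crown E Z then lucas (card Z) else fib (card Z))"
proof -
  obtain es where es: "set es = Z" "zigzag_order es" "Z \<subseteq> E"
    using assms(2) unfolding maximal_zigzag_trail_def zigzag_trail_def by auto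
  interpret zigzag_listing E es
    using assms(1) es by unfold_locales auto
  have card: "card Z = length es"
    using distinct_card[OF distinct] es(1) by simp
  show ?thesis
  proof (cases "closes_up es")
    case True
    then interpret closed_zigzag_listing E es
      by unfold_locales
    show ?thesis
      using crown_if_maximal card_end_covers_closed assms(2) es(1) card by simp
  next
    case False
    then show ?thesis
      using not_crown_if_open card_end_covers_open es(1) card by simp
  qed
qed

section \<open>Factorisation over the maximal zig-zag trails\<close>

lemma zigzag_trail_nonempty: "zigzag_trail E Z \<Longrightarrow> Z \<noteq> {}"
  by (auto simp: zigzag_trail_def zigzag_order_def)

lemma finite_maximal_zigzag_trails: "finite E \<Longrightarrow> finite {Z. maximal_zigzag_trail E Z}"
  by (rule finite_subset[of _ "Pow E"]) (auto simp: maximal_zigzag_trail_def zigzag_trail_def)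

lemma maximal_zigzag_trail_through:
  assumes "finite E" "e \<in> E"
  shows "\<exists>Z. maximal_zigzag_trail E Z \<and> e \<in> Z"
proof -
  have "zigzag_trail E {e}"
    using assms(2) unfolding zigzag_trail_def zigzag_order_def by (intro conjI exI[of _ "[e]"]) auto
  moreover have "finite {Z. zigzag_trail E Z}"
    by (rule finite_subset[of _ "Pow E"]) (use assms(1) in \<open>auto simp: zigzag_trail_def\<close>)
  ultimately obtain Z where "zigzag_trail E Z" "{e} \<subseteq> Z" "\<forall>W. zigzag_trail E W \<longrightarrow> Z \<subseteq> W \<longrightarrow> Z = W"
    using finite_has_maximal2[of "{Z. zigzag_trail E Z}" "{e}"] by auto
  then show ?thesis
    unfolding maximal_zigzag_trail_def by blast
qed

lemma maximal_zigzag_trails_disjoint: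
  assumes "degree_le_2 E" "maximal_zigzag_trail E Z" "maximal_zigzag_trail E W" "Z \<noteq> W"
  shows "Z \<inter> W = {}"
proof (rule ccontr)
  assume meet: "Z \<inter> W \<noteq> {}"
  have "zigzag_trail E Z" "zigzag_trail E W"
    using assms(2,3) by (simp_all add: maximal_zigzag_trail_def)
  then have "W \<subseteq> Z" "Z \<subseteq> W"
    using maximal_zigzag_trail_absorbs[OF assms(2,1)] maximal_zigzag_trail_absorbs[OF assms(3,1)] meet
    by (simp_all add: Int_commute)
  then show False
    using assms(4) by simp
qed

lemma maximal_zigzag_trail_Diff:
  assumes "degree_le_2 E" "maximal_zigzag_trail E Z"
  shows "maximal_zigzag_trail (E - Z) W \<longleftrightarrow> maximal_zigzag_trail E W \<and> W \<noteq> Z"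
proof
  assume max: "maximal_zigzag_trail (E - Z) W"
  then have W: "zigzag_trail E W" "W \<inter> Z = {}" "W \<noteq> {}"
    using zigzag_trail_nonempty unfolding maximal_zigzag_trail_def zigzag_trail_def by blast+
  have "\<not> W \<subset> W'" if "zigzag_trail E W'" for W'
  proof (cases "W' \<inter> Z = {}")
    case True
    then have "zigzag_trail (E - Z) W'"
      using that unfolding zigzag_trail_def by blast
    then show ?thesis
      using max unfolding maximal_zigzag_trail_def by blast
  next
    case False
    then have "W' \<subseteq> Z"
      using maximal_zigzag_trail_absorbs[OF assms(2,1) that] by blast
    then show ?thesis
      using W(2,3) by blast
  qed
  then show "maximal_zigzag_trail E W \<and> W \<noteq> Z"
    using W unfolding maximal_zigzag_trail_def by blast
next
  assume W: "maximal_zigzag_trail E W \<and> W \<noteq> Z"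
  then have "W \<inter> Z = {}"
    using maximal_zigzag_trails_disjoint[OF assms(1)] assms(2) by blast
  then show "maximal_zigzag_trail (E - Z) W"
    using W unfolding maximal_zigzag_trail_def zigzag_trail_def by blast
qed

lemma Un_eq_Un_iff_of_disjoint:
  "A1 \<subseteq> B1 \<Longrightarrow> A2 \<subseteq> B2 \<Longrightarrow> B1 \<inter> B2 = {} \<Longrightarrow> A1 \<union> A2 = B1 \<union> B2 \<longleftrightarrow> A1 = B1 \<and> A2 = B2"
  by blast

lemma end_covers_split_iff:
  assumes closed: "\<forall>e\<in>Z. \<forall>f\<in>E. share_end e f \<longrightarrow> f \<in> Z" and "Z \<subseteq> E" "G \<subseteq> E"
  shows "G \<in> end_covers E \<longleftrightarrow> G \<inter> Z \<in> end_covers Z \<and> G - Z \<in> end_covers (E - Z)"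
proof -
  have "fst e \<noteq> fst f \<and> snd e \<noteq> snd f" if "e \<in> Z" "f \<in> E - Z" for e f
    using closed that unfolding share_end_def by blast
  then have disjoint: "fst ` Z \<inter> fst ` (E - Z) = {}" "snd ` Z \<inter> snd ` (E - Z) = {}"
    by (fastforce elim!: imageE)+
  have split: "f ` G = f ` (G \<inter> Z) \<union> f ` (G - Z)" "f ` E = f ` Z \<union> f ` (E - Z)"
    for f :: "'a \<times> 'a \<Rightarrow> 'a"
    using \<open>Z \<subseteq> E\<close> by blast+
  have sub: "f ` (G \<inter> Z) \<subseteq> f ` Z" "f ` (G - Z) \<subseteq> f ` (E - Z)" for f :: "'a \<times> 'a \<Rightarrow> 'a"
    using \<open>G \<subseteq> E\<close> by blast+
  have "f ` G = f ` E \<longleftrightarrow> f ` (G \<inter> Z) = f ` Z \<and> f ` (G - Z) = f ` (E - Z)"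
    if "f ` Z \<inter> f ` (E - Z) = {}" for f :: "'a \<times> 'a \<Rightarrow> 'a"
    unfolding split[of f] by (rule Un_eq_Un_iff_of_disjoint[OF sub that])
  then show ?thesis
    using disjoint \<open>G \<subseteq> E\<close> unfolding end_covers_def by auto
qed

lemma card_end_covers_Diff:
  assumes closed: "\<forall>e\<in>Z. \<forall>f\<in>E. share_end e f \<longrightarrow> f \<in> Z" and "Z \<subseteq> E"
  shows "card (end_covers E) = card (end_covers Z) * card (end_covers (E - Z))"
proof -
  have "bij_betw (\<lambda>G. (G \<inter> Z, G - Z)) (end_covers E) (end_covers Z \<times> end_covers (E - Z))"
  proof (rule bij_betw_byWitness[where f' = "\<lambda>(A, B). A \<union> B"])
    show "\<forall>G\<in>end_covers E. (\<lambda>(A, B). A \<union> B) (G \<inter> Z, G - Z) = G"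
      by auto
    show "\<forall>AB\<in>end_covers Z \<times> end_covers (E - Z). (\<lambda>G. (G \<inter> Z, G - Z)) ((\<lambda>(A, B). A \<union> B) AB) = AB"
      by (auto simp: end_covers_def)
    show "(\<lambda>G. (G \<inter> Z, G - Z)) ` end_covers E \<subseteq> end_covers Z \<times> end_covers (E - Z)"
    proof
      fix p assume "p \<in> (\<lambda>G. (G \<inter> Z, G - Z)) ` end_covers E"
      then obtain G where G: "G \<in> end_covers E" "p = (G \<inter> Z, G - Z)"
        by blast
      then have "G \<subseteq> E"
        by (simp add: end_covers_def)
      then show "p \<in> end_covers Z \<times> end_covers (E - Z)"
        using end_covers_split_iff[OF assms] G by simp
    qed
    show "(\<lambda>(A, B). A \<union> B) ` (end_covers Z \<times> end_covers (E - Z)) \<subseteq> end_covers E"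
    proof clarify
      fix A B assume AB: "A \<in> end_covers Z" "B \<in> end_covers (E - Z)"
      then have "A \<union> B \<subseteq> E" "(A \<union> B) \<inter> Z = A" "A \<union> B - Z = B"
        using \<open>Z \<subseteq> E\<close> by (auto simp: end_covers_def)
      then show "A \<union> B \<in> end_covers E"
        using end_covers_split_iff[OF assms \<open>A \<union> B \<subseteq> E\<close>] AB by simp
    qed
  qed
  then show ?thesis
    by (simp add: bij_betw_same_card card_cartesian_product)
qed

lemma card_end_covers_prod:
  assumes "finite E" "degree_le_2 E"
  shows "card (end_covers E) = (\<Prod>Z\<in>{Z. maximal_zigzag_trail E Z}. card (end_covers Z))"
  using assms
proof (induction "card E" arbitrary: E rule: less_induct)
  case less
  show ?case
  proof (cases "E = {}")
    case True
    then have covers: "end_covers E = {{}}" and trails: "{Z. maximal_zigzag_trail E Z} = {}"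
      using zigzag_trail_nonempty by (auto simp: end_covers_def maximal_zigzag_trail_def zigzag_trail_def)
    show ?thesis
      unfolding covers trails by simp
  next
    case False
    then obtain Z where Z: "maximal_zigzag_trail E Z"
      using maximal_zigzag_trail_through[OF less.prems(1)] by blast
    then have "Z \<subseteq> E" "Z \<noteq> {}"
      using zigzag_trail_nonempty by (auto simp: maximal_zigzag_trail_def zigzag_trail_def)
    have closed: "\<forall>e\<in>Z. \<forall>f\<in>E. share_end e f \<longrightarrow> f \<in> Z"
      using maximal_zigzag_trail_closed[OF Z less.prems(2)] by blast
    have trails: "{W. maximal_zigzag_trail E W} = insert Z {W. maximal_zigzag_trail (E - Z) W}"
      and "Z \<notin> {W. maximal_zigzag_trail (E - Z) W}"
      using maximal_zigzag_trail_Diff[OF less.prems(2) Z] Z by auto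
    have "E - Z \<subset> E"
      using \<open>Z \<subseteq> E\<close> \<open>Z \<noteq> {}\<close> by blast
    then have "card (E - Z) < card E"
      by (rule psubset_card_mono[OF less.prems(1)])
    then have IH: "card (end_covers (E - Z)) = (\<Prod>W\<in>{W. maximal_zigzag_trail (E - Z) W}. card (end_covers W))"
      using less.hyps less.prems degree_le_2_subset by blast
    show ?thesis
      using card_end_covers_Diff[OF closed \<open>Z \<subseteq> E\<close>] IH trails \<open>Z \<notin> _\<close>
        finite_maximal_zigzag_trails[of "E - Z"] less.prems(1) by simp
  qed
qed

lemma card_eq_sum_maximal_zigzag_trails:
  assumes "finite E" "degree_le_2 E"
  shows "card E = (\<Sum>Z\<in>{Z. maximal_zigzag_trail E Z}. card Z)"
proof -
  have "\<Union>{Z. maximal_zigzag_trail E Z} = E"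
    using maximal_zigzag_trail_through[OF assms(1)]
    by (auto simp: maximal_zigzag_trail_def zigzag_trail_def)
  moreover have "pairwise disjnt {Z. maximal_zigzag_trail E Z}"
    using maximal_zigzag_trails_disjoint[OF assms(2)] by (auto simp: pairwise_def disjnt_def)
  moreover have "finite Z" if "maximal_zigzag_trail E Z" for Z
    using that assms(1) finite_subset by (auto simp: maximal_zigzag_trail_def zigzag_trail_def)
  ultimately show ?thesis
    using card_Union_disjoint[of "{Z. maximal_zigzag_trail E Z}"] by simp
qed

lemma prod_maximal_zigzag_trails_fence_crown:
  assumes "finite E"
  shows "(\<Prod>Z\<in>{Z. maximal_zigzag_trail E Z}. if crown E Z then lucas (card Z) else fib (card Z)) =
    (\<Prod>Z\<in>{Z. fence E Z}. fib (card Z)) * (\<Prod>Z\<in>{Z. crown E Z}. lucas (card Z))"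
proof -
  have "{Z. maximal_zigzag_trail E Z} \<inter> {Z. crown E Z} = {Z. crown E Z}"
    "{Z. maximal_zigzag_trail E Z} \<inter> - {Z. crown E Z} = {Z. fence E Z}"
    by (auto simp: crown_def fence_def)
  with prod.If_cases[OF finite_maximal_zigzag_trails[OF assms], of "crown E" "\<lambda>Z. lucas (card Z)"
      "\<lambda>Z. fib (card Z)"]
  show ?thesis
    by (simp only: mult.commute)
qed

lemma card_end_covers_fence_crown:
  assumes "finite E" "degree_le_2 E"
  shows "card (end_covers E) = (\<Prod>Z\<in>{Z. fence E Z}. fib (card Z)) * (\<Prod>Z\<in>{Z. crown E Z}. lucas (card Z))"
  using card_end_covers_prod[OF assms] card_end_covers_maximal_zigzag_trail[OF assms(2)]
    prod_maximal_zigzag_trails_fence_crown[OF assms(1)] by simp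

section \<open>Golden-ratio bounds\<close>

lemma golden_ratio_gt_1: "1 < golden_ratio"
  unfolding golden_ratio_def by (simp add: real_less_rsqrt)

lemma golden_ratio_power_Suc_Suc: "golden_ratio ^ Suc (Suc n) = golden_ratio ^ Suc n + golden_ratio ^ n"
proof -
  have "golden_ratio\<^sup>2 = golden_ratio + 1"
    unfolding golden_ratio_def by (simp add: power2_eq_square field_simps)
  then have "golden_ratio ^ Suc (Suc n) = golden_ratio ^ n * (golden_ratio + 1)"
    by (simp add: power2_eq_square)
  then show ?thesis
    by (simp add: algebra_simps)
qed

lemma golden_ratio_power_bounds_of_recurrence:
  fixes a :: "nat \<Rightarrow> real"
  assumes rec: "\<And>n. a (Suc (Suc n)) = a (Suc n) + a n"
    and "c \<le> a 0" "a 0 \<le> C" "c * golden_ratio \<le> a 1" "a 1 \<le> C * golden_ratio"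
  shows "c * golden_ratio ^ n \<le> a n \<and> a n \<le> C * golden_ratio ^ n"
proof (induction n rule: fib.induct)
  case (3 n)
  then show ?case
    using rec[of n] golden_ratio_power_Suc_Suc[of n] by (simp add: distrib_left)
qed (use assms(2-5) in simp_all)

lemma fib_lucas_golden_ratio_bounds:
  assumes "0 < m"
  shows "golden_ratio ^ m \<le> golden_ratio\<^sup>2 * fib m" "fib m \<le> 2 * golden_ratio ^ m"
    and "golden_ratio ^ m \<le> golden_ratio\<^sup>2 * lucas m" "lucas m \<le> 2 * golden_ratio ^ m"
proof -
  obtain n where m: "m = Suc n"
    using assms gr0_implies_Suc by blast
  have "2 \<le> sqrt 5"
    by (simp add: real_le_rsqrt)
  then have phi: "1 < golden_ratio" "3 \<le> 2 * golden_ratio"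
    using golden_ratio_gt_1 by (auto simp: golden_ratio_def)
  have mono: "golden_ratio ^ n \<le> golden_ratio ^ Suc n"
    using phi(1) by (intro power_increasing) auto
  have fib: "1 / golden_ratio * golden_ratio ^ n \<le> fib (Suc n) \<and> fib (Suc n) \<le> 1 * golden_ratio ^ n"
    by (rule golden_ratio_power_bounds_of_recurrence[where a = "\<lambda>n. fib (Suc n)"]) (use phi in auto)
  have lucas: "1 / golden_ratio * golden_ratio ^ n \<le> lucas (Suc n) \<and> lucas (Suc n) \<le> 2 * golden_ratio ^ n"
    by (rule golden_ratio_power_bounds_of_recurrence[where a = "\<lambda>n. lucas (Suc n)"]) (use phi in auto)
  have "0 \<le> golden_ratio ^ n"
    using phi(1) by simp
  then show "fib m \<le> 2 * golden_ratio ^ m" "lucas m \<le> 2 * golden_ratio ^ m"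
    using fib lucas mono unfolding m by linarith+
  show "golden_ratio ^ m \<le> golden_ratio\<^sup>2 * fib m" "golden_ratio ^ m \<le> golden_ratio\<^sup>2 * lucas m"
    using fib lucas phi unfolding m by (auto simp: power2_eq_square field_simps)
qed

lemma end_covers_golden_ratio_bounds:
  assumes "finite E" "degree_le_2 E"
  defines "d \<equiv> card {Z. maximal_zigzag_trail E Z}"
  shows "golden_ratio ^ card E \<le> golden_ratio ^ (2 * d) * card (end_covers E)"
    and "card (end_covers E) \<le> 2 ^ d * golden_ratio ^ card E"
proof -
  let ?T = "{Z. maximal_zigzag_trail E Z}"
  let ?c = "\<lambda>Z. real (card (end_covers Z))"
  have factor: "golden_ratio ^ card Z \<le> golden_ratio\<^sup>2 * ?c Z \<and> ?c Z \<le> 2 * golden_ratio ^ card Z"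
    if "Z \<in> ?T" for Z
  proof -
    have "finite Z" "Z \<noteq> {}"
      using that assms(1) zigzag_trail_nonempty finite_subset
      by (auto simp: maximal_zigzag_trail_def zigzag_trail_def)
    then have "0 < card Z"
      by auto
    then show ?thesis
      using fib_lucas_golden_ratio_bounds card_end_covers_maximal_zigzag_trail[OF assms(2)] that by auto
  qed
  have phi_E: "golden_ratio ^ card E = (\<Prod>Z\<in>?T. golden_ratio ^ card Z)"
    using card_eq_sum_maximal_zigzag_trails[OF assms(1,2)] by (simp add: power_sum)
  have covers_E: "real (card (end_covers E)) = (\<Prod>Z\<in>?T. ?c Z)"
    using card_end_covers_prod[OF assms(1,2)] by simp
  have "golden_ratio ^ card E \<le> (\<Prod>Z\<in>?T. golden_ratio\<^sup>2 * ?c Z)"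
    unfolding phi_E using factor golden_ratio_gt_1 by (intro prod_mono) simp
  also have "\<dots> = golden_ratio ^ (2 * d) * card (end_covers E)"
    by (simp add: prod.distrib covers_E d_def power_mult)
  finally show "golden_ratio ^ card E \<le> golden_ratio ^ (2 * d) * card (end_covers E)" .
  have "card (end_covers E) \<le> (\<Prod>Z\<in>?T. 2 * golden_ratio ^ card Z)"
    unfolding covers_E using factor by (intro prod_mono) simp
  also have "\<dots> = 2 ^ d * golden_ratio ^ card E"
    by (simp add: prod.distrib phi_E d_def)
  finally show "card (end_covers E) \<le> 2 ^ d * golden_ratio ^ card E" .
qed

section \<open>Degrees and smoothing\<close>

lemma indeg_converse: "indeg (R\<inverse>) v = outdeg R v"
  by (simp add: indeg_def outdeg_def)

lemma outdeg_converse: "outdeg (R\<inverse>) v = indeg R v"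
  by (simp add: indeg_def outdeg_def)

lemma finite_successors: "finite R \<Longrightarrow> finite {w. (v, w) \<in> R}"
  by (rule finite_subset[of _ "snd ` R"]) force+

lemma outdeg_eq_0_iff: "finite R \<Longrightarrow> outdeg R v = 0 \<longleftrightarrow> (\<forall>w. (v, w) \<notin> R)"
  by (simp add: outdeg_def finite_successors)

lemma indeg_eq_0_iff: "finite R \<Longrightarrow> indeg R v = 0 \<longleftrightarrow> (\<forall>u. (u, v) \<notin> R)"
  using outdeg_eq_0_iff[of "R\<inverse>" v] by (simp add: outdeg_converse)

lemma outdeg_mono: "finite R \<Longrightarrow> Q \<subseteq> R \<Longrightarrow> outdeg Q v \<le> outdeg R v"
  unfolding outdeg_def by (rule card_mono[OF finite_successors]) auto

lemma indeg_mono: "finite R \<Longrightarrow> Q \<subseteq> R \<Longrightarrow> indeg Q v \<le> indeg R v"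
  using outdeg_mono[of "R\<inverse>" "Q\<inverse>" v] by (simp add: outdeg_converse converse_mono)

lemma outdeg_eq_1_iff: "outdeg R v = 1 \<longleftrightarrow> (\<exists>w. {w. (v, w) \<in> R} = {w})"
  by (simp add: outdeg_def card_1_singleton_iff)

lemma card_edges_from: "card {e \<in> E. fst e = v} = outdeg E v"
proof -
  have "{e \<in> E. fst e = v} = Pair v ` {w. (v, w) \<in> E}"
    by force
  then show ?thesis
    by (simp add: outdeg_def card_image inj_on_def)
qed

lemma card_edges_to: "card {e \<in> E. snd e = v} = indeg E v"
proof -
  have "{e \<in> E. snd e = v} = (\<lambda>u. (u, v)) ` {u. (u, v) \<in> E}"
    by force
  then show ?thesis
    by (simp add: indeg_def card_image inj_on_def)
qed

lemma degree_le_2_if_degrees: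
  assumes "finite E" "\<And>v. outdeg E v \<le> 2" "\<And>v. indeg E v \<le> 2"
  shows "degree_le_2 E"
  unfolding degree_le_2_def
proof (intro ballI impI)
  fix a b c assume abc: "a \<in> E" "b \<in> E" "c \<in> E"
    and shared: "fst a = fst b \<and> fst a = fst c \<or> snd a = snd b \<and> snd a = snd c"
  show "a = b \<or> a = c \<or> b = c"
  proof (rule ccontr)
    assume "\<not> (a = b \<or> a = c \<or> b = c)"
    then have "card {a, b, c} = 3"
      by auto
    moreover have "card {a, b, c} \<le> card {e \<in> E. fst e = fst a} \<or> card {a, b, c} \<le> card {e \<in> E. snd e = snd a}"
      using shared abc assms(1) by (auto intro!: card_mono)
    moreover have "outdeg E (fst a) \<le> 2" "indeg E (snd a) \<le> 2"
      using assms(2,3) by blast+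
    ultimately show False
      by (auto simp: card_edges_from card_edges_to)
  qed
qed

lemma walk_iff_successively: "walk R xs \<longleftrightarrow> successively (\<lambda>x y. (x, y) \<in> R) xs"
  by (simp add: walk_def successively_conv_nth)

lemma walk_converse: "walk (R\<inverse>) xs \<longleftrightarrow> walk R (rev xs)"
  by (simp add: walk_iff_successively)

lemma smoothed_vertices_converse: "smoothed_vertices V (G\<inverse>) = smoothed_vertices V G"
  by (auto simp: smoothed_vertices_def indeg_converse outdeg_converse)

lemma smooth_edges_converse: "smooth_edges V (G\<inverse>) = (smooth_edges V G)\<inverse>"
proof -
  have "walk (G\<inverse>) (u # ps @ [w]) \<longleftrightarrow> walk G (w # rev ps @ [u])" for u w ps
    by (simp add: walk_converse)
  then have "(\<exists>ps. walk (G\<inverse>) (u # ps @ [w]) \<and> set ps \<subseteq> S) \<longleftrightarrow> (\<exists>ps. walk G (w # ps @ [u]) \<and> set ps \<subseteq> S)"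
    for u w S
    by (metis rev_rev_ident set_rev)
  then show ?thesis
    unfolding smooth_edges_def smoothed_vertices_converse by auto
qed

inductive exits_to :: "('a \<times> 'a) set \<Rightarrow> 'a set \<Rightarrow> 'a \<Rightarrow> 'a \<Rightarrow> bool" for R S where
  exit: "c \<notin> S \<Longrightarrow> exits_to R S c c"
| pass: "c \<in> S \<Longrightarrow> (c, d) \<in> R \<Longrightarrow> exits_to R S d w \<Longrightarrow> exits_to R S c w"

lemma exits_to_notin: "exits_to R S c w \<Longrightarrow> w \<notin> S"
  by (induction rule: exits_to.induct)

lemma exits_to_rtrancl: "exits_to R S c w \<Longrightarrow> (c, w) \<in> R\<^sup>*"
  by (induction rule: exits_to.induct) auto

lemma exits_to_unique:
  assumes "\<forall>a\<in>S. \<forall>b b'. (a, b) \<in> R \<longrightarrow> (a, b') \<in> R \<longrightarrow> b = b'"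
  shows "exits_to R S c w \<Longrightarrow> exits_to R S c w' \<Longrightarrow> w = w'"
proof (induction arbitrary: w' rule: exits_to.induct)
  case (exit c)
  then show ?case
    by (auto elim: exits_to.cases)
next
  case (pass c d w)
  from pass.prems pass.hyps(1) obtain d' where "(c, d') \<in> R" "exits_to R S d' w'"
    by (auto elim: exits_to.cases)
  then show ?case
    using pass assms by blast
qed

lemma exits_to_exists:
  assumes "finite R" "acyclic R" "\<forall>a\<in>S. \<exists>b. (a, b) \<in> R" "R \<subseteq> V \<times> V" "c \<in> V"
  shows "\<exists>w\<in>V. exits_to R S c w"
  using assms(5)
proof (induction c rule: wf_induct_rule[OF finite_acyclic_wf_converse[OF assms(1,2)]])
  case (1 c)
  show ?case
  proof (cases "c \<in> S")
    case True
    then obtain d where d: "(c, d) \<in> R"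
      using assms(3) by blast
    then have "d \<in> V"
      using assms(4) by blast
    then obtain w where "w \<in> V" "exits_to R S d w"
      using 1 d by blast
    then show ?thesis
      using exits_to.pass[OF True d] by blast
  next
    case False
    then have "exits_to R S c c"
      by (rule exits_to.exit)
    then show ?thesis
      using \<open>c \<in> V\<close> by blast
  qed
qed

lemma exits_to_if_walk_through:
  "set ps \<subseteq> S \<Longrightarrow> walk R (u # ps @ [w]) \<Longrightarrow> w \<notin> S \<Longrightarrow> \<exists>c. (u, c) \<in> R \<and> exits_to R S c w"
proof (induction ps arbitrary: u)
  case Nil
  then have "(u, w) \<in> R"
    by (simp add: walk_iff_successively)
  then show ?case
    using exits_to.exit[OF Nil(3)] by blast
next
  case (Cons p ps)
  then have "(u, p) \<in> R" "walk R (p # ps @ [w])" "p \<in> S" "set ps \<subseteq> S"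
    by (simp_all add: walk_iff_successively)
  then obtain c where "(p, c) \<in> R" "exits_to R S c w"
    using Cons.IH Cons.prems(3) by blast
  then show ?case
    using exits_to.pass[OF \<open>p \<in> S\<close>] \<open>(u, p) \<in> R\<close> by blast
qed

lemma walk_through_if_exits_to:
  "exits_to R S c w \<Longrightarrow> (u, c) \<in> R \<Longrightarrow> \<exists>ps. set ps \<subseteq> S \<and> walk R (u # ps @ [w])"
proof (induction arbitrary: u rule: exits_to.induct)
  case (exit c)
  then show ?case
    by (intro exI[of _ "[]"]) (simp add: walk_iff_successively)
next
  case (pass c d w)
  then obtain ps where "set ps \<subseteq> S" "walk R (c # ps @ [w])"
    by blast
  then show ?case
    using pass.hyps(1) pass.prems by (intro exI[of _ "c # ps"]) (simp add: walk_iff_successively)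
qed

lemma smooth_edges_iff:
  "(u, w) \<in> smooth_edges V G \<longleftrightarrow> u \<in> V - smoothed_vertices V G \<and> w \<in> V - smoothed_vertices V G \<and>
     (\<exists>c. (u, c) \<in> G \<and> exits_to G (smoothed_vertices V G) c w)"
  unfolding smooth_edges_def
  using exits_to_if_walk_through walk_through_if_exits_to exits_to_notin by fastforce

lemma smooth_edges_subset_trancl: "smooth_edges V G \<subseteq> G\<^sup>+"
  using exits_to_rtrancl by (fastforce simp: smooth_edges_iff)

lemma smooth_edges_subset:
  "smooth_edges V G \<subseteq> (V - smoothed_vertices V G) \<times> (V - smoothed_vertices V G)"
  by (auto simp: smooth_edges_iff)

lemma finite_smooth_edges: "finite V \<Longrightarrow> finite (smooth_edges V G)"
  by (rule finite_subset[OF smooth_edges_subset]) auto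

lemma acyclic_smooth_edges: "acyclic G \<Longrightarrow> acyclic (smooth_edges V G)"
  using smooth_edges_subset_trancl acyclic_subset unfolding acyclic_def by (metis trancl_id trans_trancl)

lemma smoothed_vertex_has_out_edge: "v \<in> smoothed_vertices V G \<Longrightarrow> \<exists>w. (v, w) \<in> G"
  unfolding smoothed_vertices_def outdeg_eq_1_iff by auto

lemma not_smoothed_if_no_out_edge: "\<forall>w. (v, w) \<notin> G \<Longrightarrow> v \<notin> smoothed_vertices V G"
  by (simp add: smoothed_vertices_def outdeg_def)

lemma not_smoothed_if_no_in_edge: "\<forall>u. (u, v) \<notin> G \<Longrightarrow> v \<notin> smoothed_vertices V G"
  by (simp add: smoothed_vertices_def indeg_def)

lemma smooth_edge_has_out_edge: "(u, w) \<in> smooth_edges V G \<Longrightarrow> \<exists>c. (u, c) \<in> G"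
  by (auto simp: smooth_edges_iff)

lemma smooth_edge_has_in_edge: "(u, w) \<in> smooth_edges V G \<Longrightarrow> \<exists>p. (p, w) \<in> G"
  using smooth_edge_has_out_edge[of w u V "G\<inverse>"] by (simp add: smooth_edges_converse)

lemma smooth_edge_from:
  assumes "finite G" "acyclic G" "G \<subseteq> V \<times> V" "v \<in> V - smoothed_vertices V G" "(v, c) \<in> G"
  shows "\<exists>w. (v, w) \<in> smooth_edges V G"
proof -
  have "\<forall>a\<in>smoothed_vertices V G. \<exists>b. (a, b) \<in> G"
    using smoothed_vertex_has_out_edge by auto
  moreover have "c \<in> V"
    using assms(3,5) by auto
  ultimately obtain w where w: "w \<in> V" "exits_to G (smoothed_vertices V G) c w"
    using exits_to_exists[OF assms(1,2) _ assms(3)] by meson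
  then have "(v, w) \<in> smooth_edges V G"
    unfolding smooth_edges_iff using assms(4,5) exits_to_notin[OF w(2)] by auto
  then show ?thesis ..
qed

lemma smooth_edge_into:
  assumes "finite G" "acyclic G" "G \<subseteq> V \<times> V" "v \<in> V - smoothed_vertices V G" "(p, v) \<in> G"
  shows "\<exists>u. (u, v) \<in> smooth_edges V G"
proof -
  have "finite (G\<inverse>)" "acyclic (G\<inverse>)" "G\<inverse> \<subseteq> V \<times> V" "v \<in> V - smoothed_vertices V (G\<inverse>)" "(v, p) \<in> G\<inverse>"
    using assms by (auto simp: acyclic_converse smoothed_vertices_converse)
  from smooth_edge_from[OF this] show ?thesis
    by (auto simp: smooth_edges_converse)
qed

(* The walk through smoothed vertices is forced, so every out-edge of v in G gives rise to at most
   one smoothed out-edge. *)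
lemma outdeg_smooth_edges_le:
  assumes "finite G"
  shows "outdeg (smooth_edges V G) v \<le> outdeg G v"
proof -
  let ?S = "smoothed_vertices V G"
  have functional: "\<forall>a\<in>?S. \<forall>b b'. (a, b) \<in> G \<longrightarrow> (a, b') \<in> G \<longrightarrow> b = b'"
    unfolding smoothed_vertices_def outdeg_eq_1_iff by (auto simp: set_eq_iff)
  define target where "target c = (THE w. exits_to G ?S c w)" for c
  have "{w. (v, w) \<in> smooth_edges V G} \<subseteq> target ` {c. (v, c) \<in> G}"
  proof
    fix w assume "w \<in> {w. (v, w) \<in> smooth_edges V G}"
    then obtain c where c: "(v, c) \<in> G" "exits_to G ?S c w"
      by (auto simp: smooth_edges_iff)
    then have "target c = w"
      unfolding target_def using exits_to_unique[OF functional] by blast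
    then show "w \<in> target ` {c. (v, c) \<in> G}"
      using c by blast
  qed
  then have "outdeg (smooth_edges V G) v \<le> card (target ` {c. (v, c) \<in> G})"
    unfolding outdeg_def by (intro card_mono finite_imageI finite_successors assms)
  also have "\<dots> \<le> outdeg G v"
    unfolding outdeg_def by (rule card_image_le[OF finite_successors[OF assms]])
  finally show ?thesis .
qed

lemma indeg_smooth_edges_le: "finite G \<Longrightarrow> indeg (smooth_edges V G) v \<le> indeg G v"
  using outdeg_smooth_edges_le[of "G\<inverse>" V v] by (simp add: smooth_edges_converse outdeg_converse)

section \<open>Support networks are end covers\<close>

locale phylogenetic_network =
  fixes V X :: "'a set" and E :: "('a \<times> 'a) set"
  assumes rbpn: "rbpn V E X"
begin

lemma finite_V: "finite V" and edges_in_V: "E \<subseteq> V \<times> V" and acyclic_E: "acyclic E"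
  and leaves_nonempty: "X \<noteq> {}" and leaves: "X = {v \<in> V. outdeg E v = 0}"
  using rbpn unfolding rbpn_def by auto

lemma finite_E: "finite E"
  using finite_subset[OF edges_in_V] finite_V by blast

definition root :: 'a where
  "root = (THE r. r \<in> V \<and> indeg E r = 0)"

lemma root: "root \<in> V" "indeg E root = 0"
  and root_unique: "v \<in> V \<Longrightarrow> indeg E v = 0 \<Longrightarrow> v = root"
proof -
  have ex1: "\<exists>!r. r \<in> V \<and> indeg E r = 0"
    using rbpn unfolding rbpn_def by blast
  show "root \<in> V" "indeg E root = 0"
    using theI'[OF ex1] unfolding root_def by blast+
  show "v \<in> V \<Longrightarrow> indeg E v = 0 \<Longrightarrow> v = root"
    using the1_equality[OF ex1] unfolding root_def by blast
qed

lemma root_not_leaf: "root \<notin> X"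
  using rbpn root unfolding rbpn_def by auto

lemma indeg_le_2: "indeg E v \<le> 2"
proof (cases "v \<in> V")
  case True
  then show ?thesis
    using rbpn unfolding rbpn_def by (cases "indeg E v = 0") auto
next
  case False
  then have "\<forall>u. (u, v) \<notin> E"
    using edges_in_V by auto
  then show ?thesis
    by (simp add: indeg_def)
qed

lemma outdeg_le_2: "outdeg E v \<le> 2"
proof (cases "v \<in> V")
  case True
  then show ?thesis
    using rbpn unfolding rbpn_def by (cases "indeg E v = 0") auto
next
  case False
  then have "\<forall>w. (v, w) \<notin> E"
    using edges_in_V by auto
  then show ?thesis
    by (simp add: outdeg_def)
qed

lemma degree_le_2: "degree_le_2 E"
  using degree_le_2_if_degrees[OF finite_E outdeg_le_2 indeg_le_2] .

lemma has_in_edge_iff: "v \<in> V \<Longrightarrow> (\<exists>u. (u, v) \<in> E) \<longleftrightarrow> v \<noteq> root"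
  using indeg_eq_0_iff[OF finite_E] root root_unique by metis

lemma has_out_edge_iff: "v \<in> V \<Longrightarrow> (\<exists>w. (v, w) \<in> E) \<longleftrightarrow> v \<notin> X"
  using outdeg_eq_0_iff[OF finite_E] leaves by auto

context
  fixes G assumes subgraph: "G \<subseteq> E"
begin

lemma finite_subgraph: "finite G" and acyclic_subgraph: "acyclic G" and subgraph_in_V: "G \<subseteq> V \<times> V"
  using subgraph finite_E acyclic_E edges_in_V by (auto intro: finite_subset acyclic_subset)

lemma root_unsmoothed: "root \<in> V - smoothed_vertices V G" "indeg (smooth_edges V G) root = 0"
proof -
  have no_in_edge: "\<forall>p. (p, root) \<notin> G"
    using root has_in_edge_iff subgraph by blast
  then show "root \<in> V - smoothed_vertices V G" "indeg (smooth_edges V G) root = 0"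
    using root(1) not_smoothed_if_no_in_edge[OF no_in_edge] smooth_edge_has_in_edge[of _ root V G]
    by (auto simp: indeg_eq_0_iff[OF finite_smooth_edges[OF finite_V]])
qed

lemma leaf_unsmoothed:
  assumes "x \<in> X"
  shows "x \<in> V - smoothed_vertices V G" "outdeg (smooth_edges V G) x = 0"
proof -
  have no_out_edge: "\<forall>w. (x, w) \<notin> G"
    using assms subgraph leaves outdeg_eq_0_iff[OF finite_E] by auto
  then show "x \<in> V - smoothed_vertices V G" "outdeg (smooth_edges V G) x = 0"
    using assms leaves not_smoothed_if_no_out_edge[OF no_out_edge] smooth_edge_has_out_edge[of x _ V G]
    by (auto simp: outdeg_eq_0_iff[OF finite_smooth_edges[OF finite_V]])
qed

lemma smooth_edges_degrees_le_2: "indeg (smooth_edges V G) v \<le> 2" "outdeg (smooth_edges V G) v \<le> 2"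
  using indeg_smooth_edges_le[OF finite_subgraph, of V v] indeg_mono[OF finite_E subgraph, of v]
    indeg_le_2[of v] outdeg_smooth_edges_le[OF finite_subgraph, of V v]
    outdeg_mono[OF finite_E subgraph, of v] outdeg_le_2[of v]
  by linarith+

lemma end_cover_if_smoothing_rbpn:
  assumes smoothed: "rbpn (V - smoothed_vertices V G) (smooth_edges V G) X"
  shows "G \<in> end_covers E"
proof -
  let ?S = "smoothed_vertices V G" and ?E' = "smooth_edges V G"
  have finite_E': "finite ?E'"
    by (rule finite_smooth_edges[OF finite_V])
  have "v \<in> snd ` G" if "(u, v) \<in> E" for u v
  proof (rule ccontr)
    assume "v \<notin> snd ` G"
    then have "\<forall>p. (p, v) \<notin> G"
      by force
    then have "v \<in> V - ?S" "indeg ?E' v = 0"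
      using that edges_in_V not_smoothed_if_no_in_edge[of v G V] smooth_edge_has_in_edge[of _ v V G]
      by (auto simp: indeg_eq_0_iff[OF finite_E'])
    then have "v = root"
      using smoothed root_unsmoothed unfolding rbpn_def by blast
    then show False
      using has_in_edge_iff that edges_in_V by blast
  qed
  moreover have "v \<in> fst ` G" if "(v, w) \<in> E" for v w
  proof (rule ccontr)
    assume "v \<notin> fst ` G"
    then have "\<forall>c. (v, c) \<notin> G"
      by force
    then have "v \<in> V - ?S" "outdeg ?E' v = 0"
      using that edges_in_V not_smoothed_if_no_out_edge[of v G V] smooth_edge_has_out_edge[of v _ V G]
      by (auto simp: outdeg_eq_0_iff[OF finite_E'])
    then have "v \<in> X"
      using smoothed unfolding rbpn_def by blast
    then show False
      using has_out_edge_iff that edges_in_V by blast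
  qed
  ultimately show ?thesis
    using subgraph unfolding end_covers_def by force
qed

lemma indeg_smooth_edges_pos:
  assumes "snd ` G = snd ` E" "v \<in> V - smoothed_vertices V G" "v \<noteq> root"
  shows "indeg (smooth_edges V G) v \<noteq> 0"
proof -
  obtain u where "(u, v) \<in> E"
    using has_in_edge_iff assms(2,3) by blast
  then have "v \<in> snd ` G"
    using assms(1) by force
  then obtain p where "(p, v) \<in> G"
    by force
  then show ?thesis
    using smooth_edge_into[OF finite_subgraph acyclic_subgraph subgraph_in_V assms(2)]
    by (auto simp: indeg_eq_0_iff[OF finite_smooth_edges[OF finite_V]])
qed

lemma outdeg_smooth_edges_pos:
  assumes "fst ` G = fst ` E" "v \<in> V - smoothed_vertices V G" "v \<notin> X"
  shows "outdeg (smooth_edges V G) v \<noteq> 0"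
proof -
  obtain w where "(v, w) \<in> E"
    using has_out_edge_iff assms(2,3) by blast
  then have "v \<in> fst ` G"
    using assms(1) by force
  then obtain c where "(v, c) \<in> G"
    by force
  then show ?thesis
    using smooth_edge_from[OF finite_subgraph acyclic_subgraph subgraph_in_V assms(2)]
    by (auto simp: outdeg_eq_0_iff[OF finite_smooth_edges[OF finite_V]])
qed

lemma smoothing_rbpn_if_end_cover:
  assumes "G \<in> end_covers E"
  shows "rbpn (V - smoothed_vertices V G) (smooth_edges V G) X"
  unfolding rbpn_def
proof (intro conjI)
  let ?S = "smoothed_vertices V G" and ?E' = "smooth_edges V G"
  have in_edge: "indeg ?E' v \<noteq> 0" if "v \<in> V - ?S" "v \<noteq> root" for v
    using indeg_smooth_edges_pos assms that by (simp add: end_covers_def)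
  have out_edge: "outdeg ?E' v \<noteq> 0" if "v \<in> V - ?S" "v \<notin> X" for v
    using outdeg_smooth_edges_pos assms that by (simp add: end_covers_def)
  show "finite (V - ?S)"
    using finite_V by simp
  show "?E' \<subseteq> (V - ?S) \<times> (V - ?S)"
    by (rule smooth_edges_subset)
  show "acyclic ?E'"
    by (rule acyclic_smooth_edges[OF acyclic_subgraph])
  then show "\<forall>v. (v, v) \<notin> ?E'"
    unfolding acyclic_def by blast
  show "X \<noteq> {}"
    by (rule leaves_nonempty)
  show "\<exists>!r. r \<in> V - ?S \<and> indeg ?E' r = 0"
    using root_unsmoothed in_edge by blast
  show "\<forall>r\<in>V - ?S. indeg ?E' r = 0 \<longrightarrow> outdeg ?E' r \<in> {1, 2}"
  proof (intro ballI impI)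
    fix r assume r: "r \<in> V - ?S" "indeg ?E' r = 0"
    then have "r = root"
      using in_edge by blast
    then have "outdeg ?E' r \<noteq> 0"
      using out_edge r(1) root_not_leaf by blast
    then show "outdeg ?E' r \<in> {1, 2}"
      using smooth_edges_degrees_le_2(2)[of r] by auto
  qed
  show "X = {v \<in> V - ?S. outdeg ?E' v = 0}"
    using leaf_unsmoothed out_edge by blast
  show "\<forall>v\<in>V - ?S. indeg ?E' v \<noteq> 0 \<longrightarrow> indeg ?E' v \<in> {1, 2} \<and> outdeg ?E' v \<le> 2"
  proof (intro ballI impI conjI)
    fix v assume "indeg ?E' v \<noteq> 0"
    then show "indeg ?E' v \<in> {1, 2}"
      using smooth_edges_degrees_le_2(1)[of v] by auto
  qed (rule smooth_edges_degrees_le_2(2))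
qed

end

lemma support_networks_eq_end_covers: "support_networks V E X = end_covers E"
proof (intro set_eqI iffI)
  fix G assume "G \<in> support_networks V E X"
  then have "G \<subseteq> E" "rbpn (V - smoothed_vertices V G) (smooth_edges V G) X"
    by (simp_all add: support_networks_def support_network_def)
  then show "G \<in> end_covers E"
    by (rule end_cover_if_smoothing_rbpn)
next
  fix G assume G: "G \<in> end_covers E"
  then have "G \<subseteq> E"
    by (simp add: end_covers_def)
  then show "G \<in> support_networks V E X"
    using smoothing_rbpn_if_end_cover[OF _ G] by (simp add: support_networks_def support_network_def)
qed

lemma card_support_networks:
  "card (support_networks V E X) =
     (\<Prod>Z\<in>{Z. fence E Z}. fib (card Z)) * (\<Prod>Z\<in>{Z. crown E Z}. lucas (card Z))"
  using card_end_covers_fence_crown[OF finite_E degree_le_2] by (simp add: support_networks_eq_end_covers)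

lemma support_networks_golden_ratio_bounds:
  defines "d \<equiv> card {Z. maximal_zigzag_trail E Z}"
  shows "golden_ratio ^ card E / golden_ratio ^ (2 * d) \<le> card (support_networks V E X)"
    and "card (support_networks V E X) \<le> 2 ^ d * golden_ratio ^ card E"
  using end_covers_golden_ratio_bounds[OF finite_E degree_le_2] golden_ratio_gt_1
  by (simp_all add: support_networks_eq_end_covers d_def divide_le_eq mult.commute)

end

lemma card_support_networks_Theta:
  "\<exists>c1 c2 :: real. c1 > 0 \<and> c2 > 0 \<and>
     (\<forall>(V :: 'a set) E X. rbpn V E X \<and> card {Z. maximal_zigzag_trail E Z} = d \<longrightarrow>
        c1 * golden_ratio ^ card E \<le> real (card (support_networks V E X)) \<and>
        real (card (support_networks V E X)) \<le> c2 * golden_ratio ^ card E)"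
proof (intro exI conjI allI impI)
  show "0 < 1 / golden_ratio ^ (2 * d)" "0 < (2 :: real) ^ d"
    using golden_ratio_gt_1 by simp_all
  fix V X :: "'a set" and E :: "('a \<times> 'a) set"
  assume network: "rbpn V E X \<and> card {Z. maximal_zigzag_trail E Z} = d"
  then interpret phylogenetic_network V X E
    by unfold_locales blast
  show "1 / golden_ratio ^ (2 * d) * golden_ratio ^ card E \<le> card (support_networks V E X)"
    "card (support_networks V E X) \<le> 2 ^ d * golden_ratio ^ card E"
    using support_networks_golden_ratio_bounds network by simp_all
qed

theorem theorem9:
  fixes V X :: "'a set" and E :: "('a \<times> 'a) set"
  assumes "rbpn V E X"
  shows "card (support_networks V E X) =
           (\<Prod>Z\<in>{Z. fence E Z}. fib (card Z)) * (\<Prod>Z\<in>{Z. crown E Z}. lucas (card Z)) \<and>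
         (\<forall>d::nat. \<exists>c1 c2 :: real. c1 > 0 \<and> c2 > 0 \<and>
           (\<forall>(V' :: 'a set) E' X'. rbpn V' E' X' \<and> card {Z. maximal_zigzag_trail E' Z} = d \<longrightarrow>
              c1 * golden_ratio ^ card E' \<le> real (card (support_networks V' E' X')) \<and>
              real (card (support_networks V' E' X')) \<le> c2 * golden_ratio ^ card E'))"
proof -
  interpret phylogenetic_network V X E
    using assms by unfold_locales
  show ?thesis
    using card_support_networks card_support_networks_Theta by blast
qed

end
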